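(* Let $P$ be a reversible operad with unit and $Q$ its mated species, and let $n\ge1$. The bracket $\{F,H\}=\sum_{i=1}^n\frac{\partial F}{\partial p_i}\otimes\frac{\partial H}{\partial q_i}-\frac{\partial F}{\partial q_i}\otimes\frac{\partial H}{\partial p_i}$ makes $QA_n$ a Lie algebra.
   Context: All vector spaces over $\mathbb{Q}$. Operad: vector spaces $P[I]$ (functorial in bijections of finite sets, $P[\emptyset]=0$) of operations with inputs labelled by $I$ and one output; substitution $p_2\xrightarrow{y}p_1\in P[(I\setminus\{y\})\sqcup J]$ (output of $p_2\in P[J]$ into input $y$ of $p_1\in P[I]$), linear, associative, relabelling-compatible, with unit $u\in P[1]$. $P[I,\{z\}]$: output labelled $z$. Reversible: linear $r_{x,y}:P[I,\{y\}]\to P[(I\setminus\{x\})\cup\{y\},\{x\}]$ with $r_{y,x}r_{x,y}=\mathrm{id}$, $r_{x,y}r_{y,z}=r_{x,z}$, $r_{x,z}(p_2\xrightarrow{y}p_1)=p_2\xrightarrow{y}r_{x,z}(p_1)$ if $x$ is an input of $p_1$, $=r_{y,z}(p_1)\xrightarrow{y}r_{x,y}(p_2)$ if $x$ is an input of $p_2$. Mated species: $Q[K]=\bigoplus_{I\sqcup J=K}P[I]\otimes P[J]$ (outputs with common label) modulo $p\otimes p'=p'\otimes p$ and $(p_3\xrightarrow{y}p_2)\otimes p_1=p_3\otimes(p_1\xrightarrow{w}r_{y,w}(p_2))$; the class of $p\otimes p'$ is their mating. For $q\in Q[K]$, $a\in K$, $\partial q/\partial a\in P[K\setminus\{a\}]$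 is the unique element with $q=\frac{\partial q}{\partial a}\otimes u$. $V_n$ has basis $p_1,..,p_n,q_1,..,q_n$; $QA_n=\bigoplus_{j\ge2}(Q[j]\otimes V_n^{\otimes j})_{\Sigma_j}$ and $PA_n=\bigoplus_{j\ge1}(P[j]\otimes V_n^{\otimes j})_{\Sigma_j}$ (coinvariants), spanned by elements $(s;\lambda)$ with $s$ a structure on $I$ and $\lambda$ labelling $I$ by basis vectors. For a basis vector $x$, $\frac{\partial}{\partial x}:QA_n\to PA_n$, $(q;\lambda)\mapsto\sum_{a:\lambda(a)=x}(\partial q/\partial a;\lambda|_{K\setminus\{a\}})$; $\otimes:PA_n\otimes PA_n\to QA_n$ is $(p;\lambda)\otimes(p';\lambda')\mapsto(p\otimes p';\lambda\sqcup\lambda')$. *)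

theory Defs
  imports Complex_Main "HOL-Library.Poly_Mapping" "HOL-Library.FuncSet"
begin

type_synonym 'g vec = "'g \<Rightarrow>\<^sub>0 rat"

definition vscale :: "rat \<Rightarrow> 'g vec \<Rightarrow> 'g vec" where
  "vscale c v = Poly_Mapping.map (\<lambda>x. c * x) v"

definition gen :: "'g \<Rightarrow> 'g vec" where
  "gen g = Poly_Mapping.single g 1"

definition lext :: "('g \<Rightarrow> 'h vec) \<Rightarrow> 'g vec \<Rightarrow> 'h vec" where
  "lext f v = (\<Sum>g\<in>Poly_Mapping.keys v. vscale (Poly_Mapping.lookup v g) (f g))"

inductive_set rspan :: "'g vec set \<Rightarrow> 'g vec set" for R where
  zero: "0 \<in> rspan R"
| base: "r \<in> R \<Longrightarrow> r \<in> rspan R"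
| add: "a \<in> rspan R \<Longrightarrow> b \<in> rspan R \<Longrightarrow> a + b \<in> rspan R"
| scale: "a \<in> rspan R \<Longrightarrow> vscale c a \<in> rspan R"

section \<open>Reversible operads with unit (labels are natural numbers)\<close>

text \<open>
  P I : the space of operations with inputs labelled by the finite set I (a subspace
        of an ambient rational vector space 'v).
  ren s I p : relabelling of p in P I along the bijection s : I -> s`I.
  subst I p1 y J p2 : the substitution of the output of p2 (in P J) into the input
        y of p1 (in P I); the result lies in P((I-{y}) \<union> J).  Here I \<inter> J = {}
        (the output label y of p2 is not an input of p2).
  rv I x y p : r_{x,y} : P[I,{y}] -> P[(I-{x}) \<union> {y},{x}] (output labels are not
        stored: an operation with labelled output is identified with its underlying
        element of P I).
  u a : the unit, with input labelled a (relabellings of u in P[1]).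
\<close>

locale reversible_operad =
  vector_space smul for smul :: "rat \<Rightarrow> 'v::ab_group_add \<Rightarrow> 'v" +
  fixes P :: "nat set \<Rightarrow> 'v set"
    and ren :: "(nat \<Rightarrow> nat) \<Rightarrow> nat set \<Rightarrow> 'v \<Rightarrow> 'v"
    and subst :: "nat set \<Rightarrow> 'v \<Rightarrow> nat \<Rightarrow> nat set \<Rightarrow> 'v \<Rightarrow> 'v"
    and rv :: "nat set \<Rightarrow> nat \<Rightarrow> nat \<Rightarrow> 'v \<Rightarrow> 'v"
    and u :: "nat \<Rightarrow> 'v"
  assumes P_empty: "P {} = {0}"
    and P_zero: "finite I \<Longrightarrow> 0 \<in> P I"
    and P_add: "finite I \<Longrightarrow> p \<in> P I \<Longrightarrow> q \<in> P I \<Longrightarrow> p + q \<in> P I"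
    and P_scale: "finite I \<Longrightarrow> p \<in> P I \<Longrightarrow> smul c p \<in> P I"
    and ren_closed: "finite I \<Longrightarrow> inj_on s I \<Longrightarrow> p \<in> P I \<Longrightarrow> ren s I p \<in> P (s ` I)"
    and ren_add: "finite I \<Longrightarrow> inj_on s I \<Longrightarrow> p \<in> P I \<Longrightarrow> q \<in> P I \<Longrightarrow>
        ren s I (p + q) = ren s I p + ren s I q"
    and ren_scale: "finite I \<Longrightarrow> inj_on s I \<Longrightarrow> p \<in> P I \<Longrightarrow>
        ren s I (smul c p) = smul c (ren s I p)"
    and ren_id: "finite I \<Longrightarrow> p \<in> P I \<Longrightarrow> ren id I p = p"
    and ren_comp: "finite I \<Longrightarrow> inj_on s I \<Longrightarrow> inj_on t (s ` I) \<Longrightarrow> p \<in> P I \<Longrightarrow>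
        ren (t \<circ> s) I p = ren t (s ` I) (ren s I p)"
    and ren_cong: "finite I \<Longrightarrow> (\<forall>x\<in>I. s x = t x) \<Longrightarrow> p \<in> P I \<Longrightarrow> ren s I p = ren t I p"
    and subst_closed: "finite I \<Longrightarrow> finite J \<Longrightarrow> y \<in> I \<Longrightarrow> I \<inter> J = {} \<Longrightarrow>
        p1 \<in> P I \<Longrightarrow> p2 \<in> P J \<Longrightarrow> subst I p1 y J p2 \<in> P ((I - {y}) \<union> J)"
    and subst_add1: "finite I \<Longrightarrow> finite J \<Longrightarrow> y \<in> I \<Longrightarrow> I \<inter> J = {} \<Longrightarrow>
        p1 \<in> P I \<Longrightarrow> q1 \<in> P I \<Longrightarrow> p2 \<in> P J \<Longrightarrow>
        subst I (p1 + q1) y J p2 = subst I p1 y J p2 + subst I q1 y J p2"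
    and subst_scale1: "finite I \<Longrightarrow> finite J \<Longrightarrow> y \<in> I \<Longrightarrow> I \<inter> J = {} \<Longrightarrow>
        p1 \<in> P I \<Longrightarrow> p2 \<in> P J \<Longrightarrow>
        subst I (smul c p1) y J p2 = smul c (subst I p1 y J p2)"
    and subst_add2: "finite I \<Longrightarrow> finite J \<Longrightarrow> y \<in> I \<Longrightarrow> I \<inter> J = {} \<Longrightarrow>
        p1 \<in> P I \<Longrightarrow> p2 \<in> P J \<Longrightarrow> q2 \<in> P J \<Longrightarrow>
        subst I p1 y J (p2 + q2) = subst I p1 y J p2 + subst I p1 y J q2"
    and subst_scale2: "finite I \<Longrightarrow> finite J \<Longrightarrow> y \<in> I \<Longrightarrow> I \<inter> J = {} \<Longrightarrow>
        p1 \<in> P I \<Longrightarrow> p2 \<in> P J \<Longrightarrow>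
        subst I p1 y J (smul c p2) = smul c (subst I p1 y J p2)"
    and subst_assoc_seq: "finite I \<Longrightarrow> finite J \<Longrightarrow> finite K \<Longrightarrow>
        I \<inter> J = {} \<Longrightarrow> I \<inter> K = {} \<Longrightarrow> J \<inter> K = {} \<Longrightarrow> y \<in> I \<Longrightarrow> z \<in> J \<Longrightarrow>
        p1 \<in> P I \<Longrightarrow> p2 \<in> P J \<Longrightarrow> p3 \<in> P K \<Longrightarrow>
        subst I p1 y ((J - {z}) \<union> K) (subst J p2 z K p3)
          = subst ((I - {y}) \<union> J) (subst I p1 y J p2) z K p3"
    and subst_assoc_par: "finite I \<Longrightarrow> finite J \<Longrightarrow> finite K \<Longrightarrow>
        I \<inter> J = {} \<Longrightarrow> I \<inter> K = {} \<Longrightarrow> J \<inter> K = {} \<Longrightarrow> y \<in> I \<Longrightarrow> z \<in> I \<Longrightarrow> y \<noteq> z \<Longrightarrow>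
        p1 \<in> P I \<Longrightarrow> p2 \<in> P J \<Longrightarrow> p3 \<in> P K \<Longrightarrow>
        subst ((I - {y}) \<union> J) (subst I p1 y J p2) z K p3
          = subst ((I - {z}) \<union> K) (subst I p1 z K p3) y J p2"
    and subst_ren: "finite I \<Longrightarrow> finite J \<Longrightarrow> y \<in> I \<Longrightarrow> I \<inter> J = {} \<Longrightarrow>
        inj_on s (I \<union> J) \<Longrightarrow> p1 \<in> P I \<Longrightarrow> p2 \<in> P J \<Longrightarrow>
        ren s ((I - {y}) \<union> J) (subst I p1 y J p2)
          = subst (s ` I) (ren s I p1) (s y) (s ` J) (ren s J p2)"
    and u_in: "u a \<in> P {a}"
    and u_ren: "ren s {a} (u a) = u (s a)"
    and unit_left: "finite J \<Longrightarrow> a \<notin> J \<Longrightarrow> p \<in> P J \<Longrightarrow> subst {a} (u a) a J p = p"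
    and unit_right: "finite I \<Longrightarrow> y \<in> I \<Longrightarrow> a \<notin> I \<Longrightarrow> p \<in> P I \<Longrightarrow>
        subst I p y {a} (u a) = ren (id(y := a)) I p"
    and rev_closed: "finite I \<Longrightarrow> x \<in> I \<Longrightarrow> y \<notin> I \<Longrightarrow> p \<in> P I \<Longrightarrow>
        rv I x y p \<in> P ((I - {x}) \<union> {y})"
    and rev_add: "finite I \<Longrightarrow> x \<in> I \<Longrightarrow> y \<notin> I \<Longrightarrow> p \<in> P I \<Longrightarrow> q \<in> P I \<Longrightarrow>
        rv I x y (p + q) = rv I x y p + rv I x y q"
    and rev_scale: "finite I \<Longrightarrow> x \<in> I \<Longrightarrow> y \<notin> I \<Longrightarrow> p \<in> P I \<Longrightarrow>
        rv I x y (smul c p) = smul c (rv I x y p)"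
    and rev_inv: "finite I \<Longrightarrow> x \<in> I \<Longrightarrow> y \<notin> I \<Longrightarrow> p \<in> P I \<Longrightarrow>
        rv ((I - {x}) \<union> {y}) y x (rv I x y p) = p"
    and rev_trans: "finite I \<Longrightarrow> x \<in> I \<Longrightarrow> y \<in> I \<Longrightarrow> x \<noteq> y \<Longrightarrow> z \<notin> I \<Longrightarrow> p \<in> P I \<Longrightarrow>
        rv ((I - {y}) \<union> {z}) x y (rv I y z p) = rv I x z p"
    and rev_subst1: "finite I \<Longrightarrow> finite J \<Longrightarrow> y \<in> I \<Longrightarrow> I \<inter> J = {} \<Longrightarrow>
        x \<in> I - {y} \<Longrightarrow> z \<notin> I \<union> J \<Longrightarrow> p1 \<in> P I \<Longrightarrow> p2 \<in> P J \<Longrightarrow>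
        rv ((I - {y}) \<union> J) x z (subst I p1 y J p2)
          = subst ((I - {x}) \<union> {z}) (rv I x z p1) y J p2"
    and rev_subst2: "finite I \<Longrightarrow> finite J \<Longrightarrow> y \<in> I \<Longrightarrow> I \<inter> J = {} \<Longrightarrow>
        x \<in> J \<Longrightarrow> z \<notin> I \<union> J \<Longrightarrow> p1 \<in> P I \<Longrightarrow> p2 \<in> P J \<Longrightarrow>
        rv ((I - {y}) \<union> J) x z (subst I p1 y J p2)
          = subst ((J - {x}) \<union> {y}) (rv J x y p2) y ((I - {y}) \<union> {z}) (rv I y z p1)"
    and rev_ren: "finite I \<Longrightarrow> x \<in> I \<Longrightarrow> y \<notin> I \<Longrightarrow> inj_on s (I \<union> {y}) \<Longrightarrow> p \<in> P I \<Longrightarrow>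
        ren s ((I - {x}) \<union> {y}) (rv I x y p) = rv (s ` I) (s x) (s y) (ren s I p)"

text \<open>A generator (I, p, J, p') stands for the mating p \<otimes> p' of p \<in> P I and p' \<in> P J.\<close>
type_synonym 'v qgen = "nat set \<times> 'v \<times> nat set \<times> 'v"

definition qgen_ok :: "(nat set \<Rightarrow> 'v set) \<Rightarrow> nat set \<Rightarrow> 'v qgen \<Rightarrow> bool" where
  "qgen_ok P K g = (case g of (I, p, J, p') \<Rightarrow>
     finite I \<and> finite J \<and> I \<inter> J = {} \<and> I \<union> J = K \<and> p \<in> P I \<and> p' \<in> P J)"

text \<open>Defining relations of Q[K] inside the free space on generators: bilinearity,
  symmetry, and (p3 \<rightarrow>y p2) \<otimes> p1 = p3 \<otimes> (p1 \<rightarrow>w r_{y,w}(p2)).\<close>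
definition Q_rels ::
  "(rat \<Rightarrow> 'v \<Rightarrow> 'v) \<Rightarrow> (nat set \<Rightarrow> 'v set) \<Rightarrow> (nat set \<Rightarrow> 'v \<Rightarrow> nat \<Rightarrow> nat set \<Rightarrow> 'v \<Rightarrow> 'v)
    \<Rightarrow> (nat set \<Rightarrow> nat \<Rightarrow> nat \<Rightarrow> 'v \<Rightarrow> 'v) \<Rightarrow> nat set \<Rightarrow> ('v::ab_group_add) qgen vec set" where
  "Q_rels smul P subst rv K =
     {gen (I, p + q, J, p') - gen (I, p, J, p') - gen (I, q, J, p') | I p q J p'.
        qgen_ok P K (I, p, J, p') \<and> q \<in> P I}
   \<union> {gen (I, smul c p, J, p') - vscale c (gen (I, p, J, p')) | I p J p' c.
        qgen_ok P K (I, p, J, p')}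
   \<union> {gen (I, p, J, p' + q') - gen (I, p, J, p') - gen (I, p, J, q') | I p J p' q'.
        qgen_ok P K (I, p, J, p') \<and> q' \<in> P J}
   \<union> {gen (I, p, J, smul c p') - vscale c (gen (I, p, J, p')) | I p J p' c.
        qgen_ok P K (I, p, J, p')}
   \<union> {gen (I, p, J, p') - gen (J, p', I, p) | I p J p'. qgen_ok P K (I, p, J, p')}
   \<union> {gen ((I2 - {y}) \<union> I3, subst I2 p2 y I3 p3, I1, p1)
        - gen (I3, p3, (I2 - {y}) \<union> I1, subst ((I2 - {y}) \<union> {w}) (rv I2 y w p2) w I1 p1)
      | I1 I2 I3 p1 p2 p3 y w.
        finite I1 \<and> finite I2 \<and> finite I3 \<and>
        I1 \<inter> I2 = {} \<and> I1 \<inter> I3 = {} \<and> I2 \<inter> I3 = {} \<and>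
        y \<in> I2 \<and> w \<notin> I1 \<union> I2 \<union> I3 \<and> (I2 - {y}) \<union> I1 \<union> I3 = K \<and>
        p1 \<in> P I1 \<and> p2 \<in> P I2 \<and> p3 \<in> P I3}"

text \<open>Two representatives define the same element of Q[K] iff their difference lies in Q_rel.\<close>
definition Q_rel where
  "Q_rel smul P subst rv K = rspan (Q_rels smul P subst rv K)"

text \<open>The partial derivative \<partial>q/\<partial>a \<in> P[K-{a}] of (the class of) q: the unique d with q = d \<otimes> u.\<close>
definition Q_deriv ::
  "(rat \<Rightarrow> 'v \<Rightarrow> 'v) \<Rightarrow> (nat set \<Rightarrow> 'v set) \<Rightarrow> (nat set \<Rightarrow> 'v \<Rightarrow> nat \<Rightarrow> nat set \<Rightarrow> 'v \<Rightarrow> 'v)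
    \<Rightarrow> (nat set \<Rightarrow> nat \<Rightarrow> nat \<Rightarrow> 'v \<Rightarrow> 'v) \<Rightarrow> (nat \<Rightarrow> 'v) \<Rightarrow> nat set \<Rightarrow> nat
    \<Rightarrow> ('v::ab_group_add) qgen vec \<Rightarrow> 'v" where
  "Q_deriv smul P subst rv u K a q =
     (THE d. d \<in> P (K - {a}) \<and> q - gen (K - {a}, d, {a}, u a) \<in> Q_rel smul P subst rv K)"

text \<open>Basis of V_n: Pv i = p_i and Qv i = q_i, 1 \<le> i \<le> n.\<close>
datatype vb = Pv nat | Qv nat

definition Vbasis :: "nat \<Rightarrow> vb set" where
  "Vbasis n = {Pv i | i. 1 \<le> i \<and> i \<le> n} \<union> {Qv i | i. 1 \<le> i \<and> i \<le> n}"

type_synonym 'v qagen = "'v qgen \<times> (nat \<Rightarrow> vb)"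

definition qagen_ok :: "(nat set \<Rightarrow> 'v set) \<Rightarrow> nat \<Rightarrow> 'v qagen \<Rightarrow> bool" where
  "qagen_ok P n g = (case g of ((I, p, J, p'), lam) \<Rightarrow>
     qgen_ok P (I \<union> J) (I, p, J, p') \<and> 2 \<le> card (I \<union> J) \<and> lam \<in> (I \<union> J) \<rightarrow>\<^sub>E Vbasis n)"

definition tag :: "(nat \<Rightarrow> vb) \<Rightarrow> 'v qgen vec \<Rightarrow> 'v qagen vec" where
  "tag lam = lext (\<lambda>g. gen (g, lam))"

text \<open>Relations of QA_n: the relations of Q[K] (with a labelling attached) and the
  coinvariant relations (relabelling of the underlying set).\<close>
definition QA_rels where
  "QA_rels smul P ren subst rv n =
     {tag lam r | K lam r. finite K \<and> 2 \<le> card K \<and> lam \<in> K \<rightarrow>\<^sub>E Vbasis n \<and>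
        r \<in> Q_rels smul P subst rv K}
   \<union> {gen ((I, p, J, p'), lam)
        - gen ((s ` I, ren s I p, s ` J, ren s J p'),
               restrict (lam \<circ> the_inv_into (I \<union> J) s) (s ` (I \<union> J)))
      | I p J p' lam s. qagen_ok P n ((I, p, J, p'), lam) \<and> inj_on s (I \<union> J)}"

definition QA_rel where
  "QA_rel smul P ren subst rv n = rspan (QA_rels smul P ren subst rv n)"

definition QA_space :: "(nat set \<Rightarrow> 'v set) \<Rightarrow> nat \<Rightarrow> 'v qagen vec set" where
  "QA_space P n = rspan {gen g | g. qagen_ok P n g}"

type_synonym 'v pagen = "nat set \<times> 'v \<times> (nat \<Rightarrow> vb)"

definition pagen_ok :: "(nat set \<Rightarrow> 'v set) \<Rightarrow> nat \<Rightarrow> 'v pagen \<Rightarrow> bool" where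
  "pagen_ok P n g = (case g of (I, p, lam) \<Rightarrow>
     finite I \<and> 1 \<le> card I \<and> p \<in> P I \<and> lam \<in> I \<rightarrow>\<^sub>E Vbasis n)"

definition deriv_gen where
  "deriv_gen smul P subst rv u n x g = (case g of ((I, p, J, p'), lam) \<Rightarrow>
     if qagen_ok P n g then
       (\<Sum>a\<in>{a \<in> I \<union> J. lam a = x}.
          gen ((I \<union> J) - {a},
               Q_deriv smul P subst rv u (I \<union> J) a (gen (I, p, J, p')),
               restrict lam ((I \<union> J) - {a})))
     else 0)"

definition QA_deriv where
  "QA_deriv smul P subst rv u n x = lext (deriv_gen smul P subst rv u n x)"

text \<open>\<otimes> : PA_n \<otimes> PA_n \<rightarrow> QA_n on generators (the second operation is first relabelled
  by a shift so that the label sets are disjoint), then extended bilinearly.\<close>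
definition tens_gen where
  "tens_gen P ren n g h = (case (g, h) of ((I, p, lam), (J, p', lam')) \<Rightarrow>
     if pagen_ok P n g \<and> pagen_ok P n h then
       (let sh = Suc (Max I); s = (\<lambda>x. x + sh) in
        gen ((I, p, s ` J, ren s J p'),
             restrict (\<lambda>x. if x \<in> I then lam x else lam' (x - sh)) (I \<union> s ` J)))
     else 0)"

definition PA_tens where
  "PA_tens P ren n F G = lext (\<lambda>g. lext (\<lambda>h. tens_gen P ren n g h) G) F"

definition bracket where
  "bracket smul P ren subst rv u n F H =
     (\<Sum>i\<in>{1..n}.
        PA_tens P ren n (QA_deriv smul P subst rv u n (Pv i) F) (QA_deriv smul P subst rv u n (Qv i) H)
      - PA_tens P ren n (QA_deriv smul P subst rv u n (Qv i) F) (QA_deriv smul P subst rv u n (Pv i) H))"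

section \<open>Lie algebra structure on a quotient V/R given on representatives\<close>

definition lie_algebra_quot :: "'g vec set \<Rightarrow> 'g vec set \<Rightarrow> ('g vec \<Rightarrow> 'g vec \<Rightarrow> 'g vec) \<Rightarrow> bool" where
  "lie_algebra_quot V R br \<longleftrightarrow>
     (\<forall>F\<in>V. \<forall>H\<in>V. br F H \<in> V) \<and>
     (\<forall>F\<in>V. \<forall>F'\<in>V. \<forall>H\<in>V. F - F' \<in> R \<longrightarrow> br F H - br F' H \<in> R \<and> br H F - br H F' \<in> R) \<and>
     (\<forall>F\<in>V. \<forall>F'\<in>V. \<forall>H\<in>V. \<forall>c.
        br (F + F') H - (br F H + br F' H) \<in> R \<and>
        br H (F + F') - (br H F + br H F') \<in> R \<and>
        br (vscale c F) H - vscale c (br F H) \<in> R \<and>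
        br H (vscale c F) - vscale c (br H F) \<in> R) \<and>
     (\<forall>F\<in>V. br F F \<in> R) \<and>
     (\<forall>F\<in>V. \<forall>G\<in>V. \<forall>H\<in>V. br F (br G H) + br G (br H F) + br H (br F G) \<in> R)"

end

theory Submission
  imports Defs
begin

text \<open>
  The derivative \<open>\<partial>(p \<otimes> q)/\<partial>e\<close> has an explicit formula: re-root the factor containing \<open>e\<close> at
  \<open>e\<close> (with \<open>r\<close>) and graft the other factor into its old root. This formula kills every defining
  relation of \<open>Q\<close>, which identifies it with \<open>\<partial>/\<partial>e\<close>, and it makes a generator of \<open>Q[K]\<close> determined
  by its derivative at any single label. Consequently the bracket of two generators is an explicit
  sum over pairs of labels weighted by the symplectic form \<open>\<omega>(p\<^sub>i, q\<^sub>i) = 1\<close>; it respects the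
  relations, and antisymmetry follows from the symmetry of the mating. For the Jacobi identity,
  \<open>{A,{B,C}}\<close> splits according to whether the outer derivative falls on the factor from \<open>B\<close> or
  from \<open>C\<close>; the term \<open>A \<otimes> \<partial>\<^sub>c(\<partial>\<^sub>aB \<otimes> C)\<close> cancels against \<open>C \<otimes> \<partial>\<^sub>a(A \<otimes> \<partial>\<^sub>cB)\<close> from \<open>{C,{A,B}}\<close>,
  because both have the same derivative at any label of \<open>A\<close> by associativity of the operad.
\<close>

lemma lookup_vscale [simp]: "Poly_Mapping.lookup (vscale c v) k = c * Poly_Mapping.lookup v k"
  unfolding vscale_def by (simp add: map.rep_eq when_def)

lemma vec_eqI: "(\<And>k. Poly_Mapping.lookup a k = Poly_Mapping.lookup b k) \<Longrightarrow> a = b"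
  by (rule poly_mapping_eqI) simp

lemma vscale_add_right: "vscale c (a + b) = vscale c a + vscale c b"
  by (rule vec_eqI) (simp add: lookup_add algebra_simps)

lemma vscale_add_left: "vscale (c + d) a = vscale c a + vscale d a"
  by (rule vec_eqI) (simp add: lookup_add algebra_simps)

lemma vscale_diff_right: "vscale c (a - b) = vscale c a - vscale c b"
  by (rule vec_eqI) (simp add: lookup_minus algebra_simps)

lemma vscale_diff_left: "vscale (c - d) a = vscale c a - vscale d a"
  by (rule vec_eqI) (simp add: lookup_minus algebra_simps)

lemma vscale_vscale: "vscale c (vscale d a) = vscale (c * d) a"
  by (rule vec_eqI) simp

lemma vscale_one [simp]: "vscale 1 a = a"
  by (rule vec_eqI) simp

lemma vscale_zero_left [simp]: "vscale 0 a = 0"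
  by (rule vec_eqI) simp

lemma vscale_zero_right [simp]: "vscale c 0 = 0"
  by (rule vec_eqI) simp

lemma vscale_minus_left: "vscale (- c) a = - vscale c a"
  by (rule vec_eqI) simp

lemma vscale_minus_one: "vscale (-1) a = - a"
  by (rule vec_eqI) simp

lemma vscale_sum_right: "vscale c (sum f S) = (\<Sum>x\<in>S. vscale c (f x))"
  by (induction S rule: infinite_finite_induct) (auto simp: vscale_add_right)

lemma vscale_sum_left: "vscale (sum f S) a = (\<Sum>x\<in>S. vscale (f x) a)"
  by (induction S rule: infinite_finite_induct) (auto simp: vscale_add_left)

lemma lext_superset:
  assumes "finite S" "Poly_Mapping.keys v \<subseteq> S"
  shows "lext f v = (\<Sum>g\<in>S. vscale (Poly_Mapping.lookup v g) (f g))"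
  unfolding lext_def by (rule sum.mono_neutral_left) (use assms in \<open>auto simp: in_keys_iff\<close>)

lemma lext_add: "lext f (a + b) = lext f a + lext f b"
proof -
  let ?S = "Poly_Mapping.keys a \<union> Poly_Mapping.keys b"
  have "lext f (a + b) = (\<Sum>g\<in>?S. vscale (Poly_Mapping.lookup (a + b) g) (f g))"
    by (rule lext_superset) (simp_all add: keys_add)
  also have "\<dots> = (\<Sum>g\<in>?S. vscale (Poly_Mapping.lookup a g) (f g))
                + (\<Sum>g\<in>?S. vscale (Poly_Mapping.lookup b g) (f g))"
    by (simp add: lookup_add vscale_add_left sum.distrib)
  also have "\<dots> = lext f a + lext f b"
    by (simp add: lext_superset[of ?S])
  finally show ?thesis .
qed

lemma lext_zero [simp]: "lext f 0 = 0"
  by (simp add: lext_def)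

lemma lext_vscale: "lext f (vscale c a) = vscale c (lext f a)"
proof -
  have "lext f (vscale c a) = (\<Sum>g\<in>Poly_Mapping.keys a. vscale (Poly_Mapping.lookup (vscale c a) g)
      (f g))"
    by (rule lext_superset) (auto simp: in_keys_iff)
  then show ?thesis
    by (simp add: lext_def vscale_sum_right vscale_vscale)
qed

lemma lext_uminus: "lext f (- a) = - lext f a"
  using lext_vscale[of f "-1" a] by (simp add: vscale_minus_one)

lemma lext_diff: "lext f (a - b) = lext f a - lext f b"
  using lext_add[of f a "vscale (-1) b"] lext_vscale[of f "-1" b] by (simp add: vscale_minus_one)

lemma lext_sum: "lext f (sum g S) = (\<Sum>x\<in>S. lext f (g x))"
  by (induction S rule: infinite_finite_induct) (auto simp: lext_add)

lemma lext_gen [simp]: "lext f (gen g) = f g"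
  by (simp add: lext_def gen_def)

lemma lext_fun_add: "lext (\<lambda>g. f g + f' g) v = lext f v + lext f' v"
  by (simp add: lext_def vscale_add_right sum.distrib)

lemma lext_fun_vscale: "lext (\<lambda>g. vscale c (f g)) v = vscale c (lext f v)"
  by (simp add: lext_def vscale_sum_right vscale_vscale mult.commute)

lemma keys_gen: "Poly_Mapping.keys (gen g) = {g}"
  by (simp add: gen_def)

lemma keys_diff_subset: "Poly_Mapping.keys (a - b) \<subseteq> Poly_Mapping.keys a \<union> Poly_Mapping.keys b"
  by (auto simp: in_keys_iff lookup_minus)

lemma keys_vscale_subset: "Poly_Mapping.keys (vscale c a) \<subseteq> Poly_Mapping.keys a"
  by (auto simp: in_keys_iff)

lemma rspan_uminus: "a \<in> rspan R \<Longrightarrow> - a \<in> rspan R"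
  by (metis rspan.scale vscale_minus_one)

lemma rspan_diff: "a \<in> rspan R \<Longrightarrow> b \<in> rspan R \<Longrightarrow> a - b \<in> rspan R"
  by (metis diff_conv_add_uminus rspan.add rspan_uminus)

lemma rspan_sum: "(\<And>x. x \<in> S \<Longrightarrow> f x \<in> rspan R) \<Longrightarrow> sum f S \<in> rspan R"
  by (induction S rule: infinite_finite_induct) (auto intro: rspan.intros)

lemma rspan_mono: "a \<in> rspan R \<Longrightarrow> R \<subseteq> rspan R' \<Longrightarrow> a \<in> rspan R'"
  by (induction rule: rspan.induct) (auto intro: rspan.intros)

lemma rspan_linear:
  assumes "a \<in> rspan R" "\<And>r. r \<in> R \<Longrightarrow> L r \<in> rspan R'"
    and "\<And>x y. L (x + y) = L x + L y" "\<And>c x. L (vscale c x) = vscale c (L x)"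
  shows "L a \<in> rspan R'"
  using assms(1)
proof (induction rule: rspan.induct)
  case zero
  then show ?case using assms(4)[of 0 0] by (simp add: rspan.zero)
qed (auto simp: assms(2-4) intro: rspan.intros)

section \<open>Reversible operads\<close>

lemma fresh_exists: "finite (S :: nat set) \<Longrightarrow> \<exists>v. v \<notin> S"
  using ex_new_if_finite infinite_UNIV_nat by blast

context reversible_operad
begin

lemma P_sum: "finite I \<Longrightarrow> (\<And>x. x \<in> S \<Longrightarrow> f x \<in> P I) \<Longrightarrow> sum f S \<in> P I"
  by (induction S rule: infinite_finite_induct) (auto intro: P_add P_zero)

lemma ren_id_on: "finite I \<Longrightarrow> (\<And>x. x \<in> I \<Longrightarrow> s x = x) \<Longrightarrow> p \<in> P I \<Longrightarrow> ren s I p = p"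
  by (metis ren_cong ren_id id_apply)

lemma rv_unit:
  assumes "y \<noteq> z" shows "rv {y} y z (u y) = u z"
proof -
  obtain x where x: "x \<notin> {y, z}"
    using fresh_exists[of "{y, z}"] by auto
  define p where "p = rv {y} y x (u y)"
  define r where "r = rv {y} y z (u y)"
  have pP: "p \<in> P {x}"
    unfolding p_def using rev_closed[of "{y}" y x "u y"] u_in x by auto
  have p_inv: "rv {x} x y p = u y"
    unfolding p_def using rev_inv[of "{y}" y x "u y"] u_in x by auto
  have rP: "r \<in> P {z}"
    unfolding r_def using rev_closed[of "{y}" y z "u y"] u_in assms by auto
  have "rv {x} x z p = rv (({y} - {y}) \<union> {x}) x z (subst {y} (u y) y {x} p)"
    using unit_left[of "{x}" y p] pP x by auto
  also have "\<dots> = subst (({x} - {x}) \<union> {y}) (rv {x} x y p) y (({y} - {y}) \<union> {z}) r"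
    unfolding r_def by (rule rev_subst2) (use x assms pP u_in in auto)
  finally have via_r: "rv {x} x z p = subst {y} (u y) y {z} r"
    by (simp add: p_inv)
  \<comment> \<open>the same element, computed with the unit axiom on the right instead\<close>
  define s where "s = id(y := z)"
  have "ren s (({x} - {x}) \<union> {y}) (rv {x} x y p) = rv (s ` {x}) (s x) (s y) (ren s {x} p)"
    by (rule rev_ren) (use x assms pP in \<open>auto simp: s_def\<close>)
  moreover have "ren s {x} p = p"
    by (rule ren_id_on) (use x pP in \<open>auto simp: s_def\<close>)
  ultimately have "ren s {y} (rv {x} x y p) = rv {x} x z p"
    using x by (simp add: s_def)
  moreover have "subst {y} (rv {x} x y p) y {z} (u z) = ren s {y} (rv {x} x y p)"
    unfolding s_def by (rule unit_right) (use x assms p_inv u_in in auto)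
  ultimately have via_u: "rv {x} x z p = subst {y} (u y) y {z} (u z)"
    by (simp add: p_inv)
  show ?thesis
    using via_r via_u unit_left[of "{z}" y r] unit_left[of "{z}" y "u z"] rP u_in assms
    by (simp add: r_def)
qed

lemma rv_rv:
  assumes "finite I" "y \<in> I" "w \<notin> I" "w' \<notin> I" "w' \<noteq> w" "p \<in> P I"
  shows "rv ((I - {y}) \<union> {w}) w w' (rv I y w p) = ren (id(y := w')) I p"
proof -
  define Z where "Z = (I - {y}) \<union> {w}"
  define q where "q = rv I y w p"
  define s where "s = id(y := w')"
  have qP: "q \<in> P Z" unfolding q_def Z_def using rev_closed assms by auto
  have "rv Z w y q = p" unfolding Z_def q_def using rev_inv assms by auto
  moreover have "ren s ((Z - {w}) \<union> {y}) (rv Z w y q) = rv (s ` Z) (s w) (s y) (ren s Z q)"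
    by (rule rev_ren) (use assms qP in \<open>auto simp: Z_def s_def inj_on_def\<close>)
  moreover have "(Z - {w}) \<union> {y} = I" "s ` Z = Z" "s w = w" "s y = w'"
    using assms by (auto simp: Z_def s_def)
  moreover have "ren s Z q = q" by (rule ren_id_on) (use qP assms in \<open>auto simp: s_def Z_def\<close>)
  ultimately show ?thesis by (simp add: Z_def q_def s_def)
qed

lemma rv_rv_ren:
  assumes "finite I" "e \<in> I" "y \<in> I" "e \<noteq> y" "w \<notin> I" "v \<notin> I" "v \<noteq> w" "p \<in> P I"
  shows "rv ((I - {y}) \<union> {w}) e v (rv I y w p) = ren (id(y := v)) ((I - {e}) \<union> {w}) (rv I e w p)"
proof -
  define I2 where "I2 = (I - {y}) \<union> {w}"
  define q where "q = rv I y w p"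
  define s where "s = id(y := v)"
  have qP: "q \<in> P I2" unfolding q_def I2_def using rev_closed assms by auto
  have "rv I2 e y q = rv I e w p"
    unfolding I2_def q_def by (rule rev_trans) (use assms in auto)
  moreover have "ren s ((I2 - {e}) \<union> {y}) (rv I2 e y q) = rv (s ` I2) (s e) (s y) (ren s I2 q)"
    by (rule rev_ren) (use assms qP in \<open>auto simp: I2_def s_def inj_on_def\<close>)
  moreover have "s ` I2 = I2" "(I2 - {e}) \<union> {y} = (I - {e}) \<union> {w}" "s e = e" "s y = v"
    using assms by (auto simp: I2_def s_def)
  moreover have "ren s I2 q = q" by (rule ren_id_on) (use assms qP in \<open>auto simp: I2_def s_def\<close>)
  ultimately show ?thesis by (simp add: I2_def q_def s_def)
qed

lemma subst_rename_root:
  assumes "finite I" "finite J" "y \<in> I" "I \<inter> J = {}" "v \<notin> I \<union> J" "p \<in> P I" "q \<in> P J"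
  shows "subst ((I - {y}) \<union> {v}) (ren (id(y := v)) I p) v J q = subst I p y J q"
proof -
  define s where "s = id(y := v)"
  have "ren s ((I - {y}) \<union> J) (subst I p y J q)
      = subst (s ` I) (ren s I p) (s y) (s ` J) (ren s J q)"
    by (rule subst_ren) (use assms in \<open>auto simp: s_def inj_on_def\<close>)
  moreover have "ren s ((I - {y}) \<union> J) (subst I p y J q) = subst I p y J q"
    by (rule ren_id_on) (use assms subst_closed in \<open>auto simp: s_def\<close>)
  moreover have "s ` I = (I - {y}) \<union> {v}" "s ` J = J" using assms by (auto simp: s_def)
  moreover have "ren s J q = q" by (rule ren_id_on) (use assms in \<open>auto simp: s_def\<close>)
  ultimately show ?thesis by (simp add: s_def)
qed

lemma subst_rv_root_indep:
  assumes "finite I" "finite J" "I \<inter> J = {}" "e \<in> I" "w \<notin> I \<union> J" "w' \<notin> I \<union> J"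
    "p \<in> P I" "q \<in> P J"
  shows "subst ((I - {e}) \<union> {w}) (rv I e w p) w J q = subst ((I - {e}) \<union> {w'}) (rv I e w' p) w' J q"
proof (cases "w = w'")
  case False
  define I' where "I' = (I - {e}) \<union> {w}"
  have rP: "rv I e w p \<in> P I'" unfolding I'_def using rev_closed assms by auto
  have "subst ((I' - {w}) \<union> {w'}) (ren (id(w := w')) I' (rv I e w p)) w' J q
      = subst I' (rv I e w p) w J q"
    by (rule subst_rename_root) (use assms rP False in \<open>auto simp: I'_def\<close>)
  moreover have "ren (id(w := w')) ((I - {e}) \<union> {w}) (rv I e w p)
      = rv (id(w := w') ` I) ((id(w := w')) e) ((id(w := w')) w) (ren (id(w := w')) I p)"
    by (rule rev_ren) (use assms in \<open>auto simp: inj_on_def\<close>)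
  moreover have "ren (id(w := w')) I p = p" by (rule ren_id_on) (use assms in auto)
  moreover have "id(w := w') ` I = I" "(I' - {w}) \<union> {w'} = (I - {e}) \<union> {w'}" "e \<noteq> w"
    using assms by (auto simp: I'_def)
  ultimately show ?thesis using assms by (simp add: I'_def)
qed simp

end

section \<open>The derivative of a mating\<close>

definition fresh_label :: "nat set \<Rightarrow> nat" where
  "fresh_label S = Suc (Max (insert 0 S))"

lemma fresh_label_notin:
  assumes "finite S" shows "fresh_label S \<notin> S"
proof
  assume "fresh_label S \<in> S"
  then have "fresh_label S \<le> Max (insert 0 S)" using assms by (intro Max_ge) auto
  then show False by (simp add: fresh_label_def)
qed

context reversible_operad
begin

text \<open>For an input \<open>e\<close> of \<open>p\<close>, the defining relation of \<open>Q\<close> rewrites the mating \<open>p \<otimes> q\<close>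
  as \<open>u \<otimes> (q \<rightarrow>\<^sub>w r\<^sub>e\<^sub>,\<^sub>w(p))\<close>, so \<open>\<partial>(p \<otimes> q)/\<partial>e\<close> is \<open>q\<close> grafted into \<open>p\<close> re-rooted at \<open>e\<close>.\<close>

definition reroot :: "nat set \<Rightarrow> 'v \<Rightarrow> nat set \<Rightarrow> 'v \<Rightarrow> nat \<Rightarrow> 'v" where
  "reroot I p J q e =
     subst ((I - {e}) \<union> {fresh_label (I \<union> J)}) (rv I e (fresh_label (I \<union> J)) p)
         (fresh_label (I \<union> J)) J q"

definition mating_deriv :: "nat \<Rightarrow> 'v qgen \<Rightarrow> 'v" where
  "mating_deriv e g =
     (case g of (I, p, J, q) \<Rightarrow> if e \<in> I then reroot I p J q e else reroot J q I p e)"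

lemma reroot_eq:
  assumes "finite I" "finite J" "I \<inter> J = {}" "e \<in> I" "w \<notin> I \<union> J" "p \<in> P I" "q \<in> P J"
  shows "reroot I p J q e = subst ((I - {e}) \<union> {w}) (rv I e w p) w J q"
  unfolding reroot_def by (rule subst_rv_root_indep)
      (use assms fresh_label_notin[of "I \<union> J"] in auto)

lemma mating_deriv_left:
  assumes "finite I" "finite J" "I \<inter> J = {}" "e \<in> I" "w \<notin> I \<union> J" "p \<in> P I" "q \<in> P J"
  shows "mating_deriv e (I, p, J, q) = subst ((I - {e}) \<union> {w}) (rv I e w p) w J q"
  using reroot_eq[OF assms] assms(4) by (simp add: mating_deriv_def)

lemma mating_deriv_right:
  assumes "finite I" "finite J" "I \<inter> J = {}" "e \<in> J" "w \<notin> I \<union> J" "p \<in> P I" "q \<in> P J"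
  shows "mating_deriv e (I, p, J, q) = subst ((J - {e}) \<union> {w}) (rv J e w q) w I p"
  using reroot_eq[of J I e w q p] assms by (auto simp: mating_deriv_def)

lemma mating_deriv_swap:
  assumes "I \<inter> J = {}" "e \<in> I \<union> J"
  shows "mating_deriv e (J, q, I, p) = mating_deriv e (I, p, J, q)"
  using assms by (auto simp: mating_deriv_def reroot_def Un_commute)

lemma qgen_ok_swap: "qgen_ok P K (I, p, J, q) \<Longrightarrow> qgen_ok P K (J, q, I, p)"
  by (auto simp: qgen_ok_def)

lemma mating_deriv_in_left:
  assumes "qgen_ok P K (I, p, J, q)" "e \<in> I"
  shows "mating_deriv e (I, p, J, q) \<in> P (K - {e})"
proof -
  from assms have a: "finite I" "finite J" "I \<inter> J = {}" "I \<union> J = K" "p \<in> P I" "q \<in> P J"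
    by (auto simp: qgen_ok_def)
  define w where "w = fresh_label K"
  have w: "w \<notin> I \<union> J" using fresh_label_notin a unfolding w_def by auto
  have "subst ((I - {e}) \<union> {w}) (rv I e w p) w J q \<in> P ((((I - {e}) \<union> {w}) - {w}) \<union> J)"
    by (rule subst_closed) (use assms a w rev_closed in auto)
  moreover have "(((I - {e}) \<union> {w}) - {w}) \<union> J = K - {e}" using w a assms by auto
  ultimately show ?thesis using mating_deriv_left[OF a(1-3) assms(2) w a(5,6)] by simp
qed

lemma mating_deriv_in:
  assumes "qgen_ok P K g" "e \<in> K"
  shows "mating_deriv e g \<in> P (K - {e})"
proof -
  obtain I p J q where g: "g = (I, p, J, q)" by (cases g)
  show ?thesis
  proof (cases "e \<in> I")
    case False
    then have "e \<in> J" "I \<inter> J = {}" using assms by (auto simp: g qgen_ok_def)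
    moreover have "mating_deriv e (J, q, I, p) \<in> P (K - {e})"
      by (rule mating_deriv_in_left) (use qgen_ok_swap assms \<open>e \<in> J\<close> in \<open>auto simp: g\<close>)
    ultimately show ?thesis using mating_deriv_swap by (simp add: g)
  qed (use mating_deriv_in_left assms g in auto)
qed

lemma mating_deriv_add_left:
  assumes ok: "qgen_ok P K (I, p, J, p')" and q: "q \<in> P I" and e: "e \<in> K"
  shows "mating_deriv e (I, p + q, J, p') = mating_deriv e (I, p, J, p')
      + mating_deriv e (I, q, J, p')"
proof -
  from ok have a: "finite I" "finite J" "I \<inter> J = {}" "I \<union> J = K" "p \<in> P I" "p' \<in> P J"
    by (auto simp: qgen_ok_def)
  define w where "w = fresh_label K"
  have w: "w \<notin> I \<union> J" using fresh_label_notin a unfolding w_def by auto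
  have pq: "p + q \<in> P I" using a q P_add by auto
  show ?thesis
  proof (cases "e \<in> I")
    case True
    have r: "rv I e w (p + q) = rv I e w p + rv I e w q" using rev_add a True w q by auto
    show ?thesis
      unfolding mating_deriv_left[OF a(1-3) True w pq a(6)] mating_deriv_left[OF a(1-3) True w a(5,6)]
        mating_deriv_left[OF a(1-3) True w q a(6)] r
      by (rule subst_add1) (use a True w q rev_closed in auto)
  next
    case False
    then have eJ: "e \<in> J" using a e by auto
    show ?thesis
      unfolding mating_deriv_right[OF a(1-3) eJ w pq a(6)] mating_deriv_right[OF a(1-3) eJ w a(5,6)]
        mating_deriv_right[OF a(1-3) eJ w q a(6)]
      by (rule subst_add2) (use a eJ w q rev_closed in auto)
  qed
qed

lemma mating_deriv_scale_left:
  assumes ok: "qgen_ok P K (I, p, J, p')" and e: "e \<in> K"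
  shows "mating_deriv e (I, smul c p, J, p') = smul c (mating_deriv e (I, p, J, p'))"
proof -
  from ok have a: "finite I" "finite J" "I \<inter> J = {}" "I \<union> J = K" "p \<in> P I" "p' \<in> P J"
    by (auto simp: qgen_ok_def)
  define w where "w = fresh_label K"
  have w: "w \<notin> I \<union> J" using fresh_label_notin a unfolding w_def by auto
  have cp: "smul c p \<in> P I" using a P_scale by auto
  show ?thesis
  proof (cases "e \<in> I")
    case True
    have r: "rv I e w (smul c p) = smul c (rv I e w p)" using rev_scale a True w by auto
    show ?thesis
      unfolding mating_deriv_left[OF a(1-3) True w cp a(6)] mating_deriv_left[OF a(1-3) True w a(5,6)] r
      by (rule subst_scale1) (use a True w rev_closed in auto)
  next
    case False
    then have eJ: "e \<in> J" using a e by auto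
    show ?thesis
      unfolding mating_deriv_right[OF a(1-3) eJ w cp a(6)] mating_deriv_right[OF a(1-3) eJ w a(5,6)]
      by (rule subst_scale2) (use a eJ w rev_closed in auto)
  qed
qed

lemma mating_deriv_add_right:
  assumes ok: "qgen_ok P K (I, p, J, p')" and q: "q' \<in> P J" and e: "e \<in> K"
  shows "mating_deriv e (I, p, J, p' + q') = mating_deriv e (I, p, J, p')
      + mating_deriv e (I, p, J, q')"
proof -
  have "I \<inter> J = {}" "e \<in> I \<union> J" using ok e by (auto simp: qgen_ok_def)
  then show ?thesis
    using mating_deriv_add_left[OF qgen_ok_swap[OF ok] q e] mating_deriv_swap by metis
qed

lemma mating_deriv_scale_right:
  assumes ok: "qgen_ok P K (I, p, J, p')" and e: "e \<in> K"
  shows "mating_deriv e (I, p, J, smul c p') = smul c (mating_deriv e (I, p, J, p'))"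
proof -
  have "I \<inter> J = {}" "e \<in> I \<union> J" using ok e by (auto simp: qgen_ok_def)
  then show ?thesis
    using mating_deriv_scale_left[OF qgen_ok_swap[OF ok] e] mating_deriv_swap by metis
qed

text \<open>The derivative is constant along the defining relation
  \<open>(p\<^sub>3 \<rightarrow>\<^sub>y p\<^sub>2) \<otimes> p\<^sub>1 = p\<^sub>3 \<otimes> (p\<^sub>1 \<rightarrow>\<^sub>w r\<^sub>y\<^sub>,\<^sub>w(p\<^sub>2))\<close>.\<close>

context
  fixes I1 I2 I3 :: "nat set" and y w :: nat and p1 p2 p3 :: 'v
  assumes fin: "finite I1" "finite I2" "finite I3"
    and disj: "I1 \<inter> I2 = {}" "I1 \<inter> I3 = {}" "I2 \<inter> I3 = {}"
    and y: "y \<in> I2" and w: "w \<notin> I1 \<union> I2 \<union> I3"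
    and pP: "p1 \<in> P I1" "p2 \<in> P I2" "p3 \<in> P I3"
begin

lemma graft_in: "subst I2 p2 y I3 p3 \<in> P ((I2 - {y}) \<union> I3)"
  using subst_closed fin disj y pP by auto

lemma rv_graft_in: "subst ((I2 - {y}) \<union> {w}) (rv I2 y w p2) w I1 p1 \<in> P ((I2 - {y}) \<union> I1)"
proof -
  have "subst ((I2 - {y}) \<union> {w}) (rv I2 y w p2) w I1 p1 \<in> P ((((I2 - {y}) \<union> {w}) - {w}) \<union> I1)"
    by (rule subst_closed) (use fin disj w y pP rev_closed in auto)
  moreover have "(((I2 - {y}) \<union> {w}) - {w}) \<union> I1 = (I2 - {y}) \<union> I1" using w by auto
  ultimately show ?thesis by simp
qed

lemma mating_deriv_graft_rel_I1:
  assumes e: "e \<in> I1"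
  shows "mating_deriv e ((I2 - {y}) \<union> I3, subst I2 p2 y I3 p3, I1, p1)
       = mating_deriv e (I3, p3, (I2 - {y}) \<union> I1, subst ((I2 - {y}) \<union> {w}) (rv I2 y w p2) w I1 p1)"
proof -
  obtain v where v: "v \<notin> I1 \<union> I2 \<union> I3 \<union> {w}"
    using fresh_exists[of "I1 \<union> I2 \<union> I3 \<union> {w}"] fin by auto
  define A where "A = (I1 - {e}) \<union> {w}"
  define a where "a = rv I1 e w p1"
  define B where "B = (I2 - {y}) \<union> {v}"
  define b where "b = ren (id(y := v)) I2 p2"
  have aP: "a \<in> P A" unfolding a_def A_def using rev_closed fin e w pP by auto
  have bP: "b \<in> P B"
  proof -
    have "b \<in> P (id(y := v) ` I2)" unfolding b_def
      by (rule ren_closed) (use fin v pP in \<open>auto simp: inj_on_def\<close>)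
    moreover have "id(y := v) ` I2 = B" using y v by (auto simp: B_def)
    ultimately show ?thesis by simp
  qed
  have "mating_deriv e ((I2 - {y}) \<union> I3, subst I2 p2 y I3 p3, I1, p1)
      = subst A a w ((I2 - {y}) \<union> I3) (subst I2 p2 y I3 p3)"
    unfolding A_def a_def by (rule mating_deriv_right) (use fin disj e w pP graft_in in auto)
  also have "\<dots> = subst A a w ((B - {v}) \<union> I3) (subst B b v I3 p3)"
    using subst_rename_root[of I2 I3 y v p2 p3] fin disj y v pP by (simp add: B_def b_def)
  also have "\<dots> = subst ((A - {w}) \<union> B) (subst A a w B b) v I3 p3"
    by (rule subst_assoc_seq) (use fin disj w v e aP bP pP in \<open>auto simp: A_def B_def\<close>)
  also have "\<dots> = subst ((((I2 - {y}) \<union> I1) - {e}) \<union> {v})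
      (rv ((I2 - {y}) \<union> I1) e v (subst ((I2 - {y}) \<union> {w}) (rv I2 y w p2) w I1 p1)) v I3 p3"
  proof -
    have "rv ((((I2 - {y}) \<union> {w}) - {w}) \<union> I1) e v (subst ((I2 - {y}) \<union> {w}) (rv I2 y w p2) w I1 p1)
        = subst A a w ((((I2 - {y}) \<union> {w}) - {w}) \<union> {v}) (rv ((I2 - {y}) \<union> {w}) w v (rv I2 y w p2))"
      unfolding A_def a_def by (rule rev_subst2) (use fin disj w v e y pP rev_closed in auto)
    moreover have "rv ((I2 - {y}) \<union> {w}) w v (rv I2 y w p2) = b"
      unfolding b_def by (rule rv_rv) (use fin y w v pP in auto)
    moreover have "(((I2 - {y}) \<union> {w}) - {w}) \<union> {v} = B" "(((I2 - {y}) \<union> {w}) - {w}) \<union> I1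
        = (I2 - {y}) \<union> I1"
      "(A - {w}) \<union> B = (((I2 - {y}) \<union> I1) - {e}) \<union> {v}"
      using w v e disj by (auto simp: A_def B_def)
    ultimately show ?thesis by simp
  qed
  also have "\<dots> = mating_deriv e
      (I3, p3, (I2 - {y}) \<union> I1, subst ((I2 - {y}) \<union> {w}) (rv I2 y w p2) w I1 p1)"
    by (rule mating_deriv_right[symmetric]) (use fin disj e v pP rv_graft_in in auto)
  finally show ?thesis .
qed

lemma mating_deriv_graft_rel_I3:
  assumes e: "e \<in> I3"
  shows "mating_deriv e ((I2 - {y}) \<union> I3, subst I2 p2 y I3 p3, I1, p1)
       = mating_deriv e (I3, p3, (I2 - {y}) \<union> I1, subst ((I2 - {y}) \<union> {w}) (rv I2 y w p2) w I1 p1)"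
proof -
  define C where "C = (I3 - {e}) \<union> {y}"
  define c where "c = rv I3 e y p3"
  define I2' where "I2' = (I2 - {y}) \<union> {w}"
  define q where "q = rv I2 y w p2"
  have cP: "c \<in> P C" unfolding c_def C_def using rev_closed[of I3 e y p3] fin e y disj pP by auto
  have qP: "q \<in> P I2'" unfolding q_def I2'_def using rev_closed fin y w pP by auto
  have "mating_deriv e ((I2 - {y}) \<union> I3, subst I2 p2 y I3 p3, I1, p1)
      = subst ((((I2 - {y}) \<union> I3) - {e}) \<union> {w}) (rv ((I2 - {y}) \<union> I3) e w (subst I2 p2 y I3 p3)) w
          I1 p1"
    by (rule mating_deriv_left) (use fin disj e w pP graft_in in auto)
  also have "\<dots> = subst ((C - {y}) \<union> I2') (subst C c y I2' q) w I1 p1"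
  proof -
    have "rv ((I2 - {y}) \<union> I3) e w (subst I2 p2 y I3 p3) = subst C c y I2' q"
      unfolding C_def c_def I2'_def q_def by (rule rev_subst2) (use fin disj y w e pP in auto)
    moreover have "(C - {y}) \<union> I2' = (((I2 - {y}) \<union> I3) - {e}) \<union> {w}"
      using y disj e w by (auto simp: C_def I2'_def)
    ultimately show ?thesis by simp
  qed
  also have "\<dots> = subst C c y ((I2' - {w}) \<union> I1) (subst I2' q w I1 p1)"
    by (rule subst_assoc_seq[symmetric]) (use fin disj y w e cP qP pP in \<open>auto simp: C_def I2'_def\<close>)
  also have "\<dots> = mating_deriv e (I3, p3, (I2 - {y}) \<union> I1, subst I2' q w I1 p1)"
  proof -
    have "mating_deriv e (I3, p3, (I2 - {y}) \<union> I1, subst I2' q w I1 p1)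
        = subst C c y ((I2 - {y}) \<union> I1) (subst I2' q w I1 p1)"
      unfolding C_def c_def I2'_def q_def
      by (rule mating_deriv_left) (use fin disj e y pP rv_graft_in in auto)
    moreover have "(I2' - {w}) \<union> I1 = (I2 - {y}) \<union> I1" using w by (auto simp: I2'_def)
    ultimately show ?thesis by simp
  qed
  finally show ?thesis by (simp add: I2'_def q_def)
qed

lemma rv_graft_rv:
  assumes e: "e \<in> I2" "e \<noteq> y" and v: "v \<notin> I1 \<union> I2 \<union> I3 \<union> {w}"
  shows "rv ((I2 - {y}) \<union> I1) e v (subst ((I2 - {y}) \<union> {w}) (rv I2 y w p2) w I1 p1)
       = ren (id(y := v)) ((((I2 - {e}) \<union> {w}) - {w}) \<union> I1)
           (subst ((I2 - {e}) \<union> {w}) (rv I2 e w p2) w I1 p1)"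
proof -
  define s where "s = id(y := v)"
  define I2' where "I2' = (I2 - {y}) \<union> {w}"
  define D where "D = (I2 - {e}) \<union> {w}"
  have qP: "rv I2 y w p2 \<in> P I2'" unfolding I2'_def using rev_closed fin y w pP by auto
  have dP: "rv I2 e w p2 \<in> P D" unfolding D_def using rev_closed fin e w pP by auto
  have "rv ((I2' - {w}) \<union> I1) e v (subst I2' (rv I2 y w p2) w I1 p1)
      = subst ((I2' - {e}) \<union> {v}) (rv I2' e v (rv I2 y w p2)) w I1 p1"
    by (rule rev_subst1) (use fin disj w v e qP pP in \<open>auto simp: I2'_def\<close>)
  also have "rv I2' e v (rv I2 y w p2) = ren s D (rv I2 e w p2)"
    unfolding I2'_def s_def D_def by (rule rv_rv_ren) (use fin e y w v pP in auto)
  also have "subst ((I2' - {e}) \<union> {v}) (ren s D (rv I2 e w p2)) w I1 p1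
      = subst (s ` D) (ren s D (rv I2 e w p2)) (s w) (s ` I1) (ren s I1 p1)"
  proof -
    have "s ` D = (I2' - {e}) \<union> {v}" "s ` I1 = I1" "s w = w"
      using e y w v disj by (auto simp: s_def D_def I2'_def)
    moreover have "ren s I1 p1 = p1" by (rule ren_id_on) (use fin disj y pP in \<open>auto simp: s_def\<close>)
    ultimately show ?thesis by simp
  qed
  also have "\<dots> = ren s ((D - {w}) \<union> I1) (subst D (rv I2 e w p2) w I1 p1)"
    by (rule subst_ren[symmetric])
        (use fin disj w v e y dP pP in \<open>auto simp: D_def s_def inj_on_def\<close>)
  finally show ?thesis using w by (simp add: I2'_def D_def s_def)
qed

lemma mating_deriv_graft_rel_I2:
  assumes e: "e \<in> I2" "e \<noteq> y"
  shows "mating_deriv e ((I2 - {y}) \<union> I3, subst I2 p2 y I3 p3, I1, p1)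
       = mating_deriv e (I3, p3, (I2 - {y}) \<union> I1, subst ((I2 - {y}) \<union> {w}) (rv I2 y w p2) w I1 p1)"
proof -
  obtain v where v: "v \<notin> I1 \<union> I2 \<union> I3 \<union> {w}"
    using fresh_exists[of "I1 \<union> I2 \<union> I3 \<union> {w}"] fin by auto
  define D where "D = (I2 - {e}) \<union> {w}"
  define d where "d = rv I2 e w p2"
  define Z where "Z = (D - {w}) \<union> I1"
  define t where "t = subst D d w I1 p1"
  have dP: "d \<in> P D" unfolding d_def D_def using rev_closed fin e w pP by auto
  have tP: "t \<in> P Z" unfolding t_def Z_def
    by (rule subst_closed) (use fin disj w e dP pP in \<open>auto simp: D_def\<close>)
  have "mating_deriv e ((I2 - {y}) \<union> I3, subst I2 p2 y I3 p3, I1, p1)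
      = subst ((((I2 - {y}) \<union> I3) - {e}) \<union> {w}) (rv ((I2 - {y}) \<union> I3) e w (subst I2 p2 y I3 p3)) w
          I1 p1"
    by (rule mating_deriv_left) (use fin disj e w pP graft_in in auto)
  also have "\<dots> = subst ((D - {y}) \<union> I3) (subst D d y I3 p3) w I1 p1"
  proof -
    have "rv ((I2 - {y}) \<union> I3) e w (subst I2 p2 y I3 p3) = subst D d y I3 p3"
      unfolding D_def d_def by (rule rev_subst1) (use fin disj y w e pP in auto)
    moreover have "(D - {y}) \<union> I3 = (((I2 - {y}) \<union> I3) - {e}) \<union> {w}"
      using e w disj y by (auto simp: D_def)
    ultimately show ?thesis by simp
  qed
  also have "\<dots> = subst Z t y I3 p3"
    unfolding Z_def t_def by (rule subst_assoc_par) (use fin disj y w e dP pP in \<open>auto simp: D_def\<close>)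
  also have "\<dots> = subst ((Z - {y}) \<union> {v}) (ren (id(y := v)) Z t) v I3 p3"
    by (rule subst_rename_root[symmetric]) (use fin disj y w v e tP pP in \<open>auto simp: Z_def D_def\<close>)
  also have "\<dots> = subst ((((I2 - {y}) \<union> I1) - {e}) \<union> {v})
      (rv ((I2 - {y}) \<union> I1) e v (subst ((I2 - {y}) \<union> {w}) (rv I2 y w p2) w I1 p1)) v I3 p3"
  proof -
    have "(Z - {y}) \<union> {v} = (((I2 - {y}) \<union> I1) - {e}) \<union> {v}" using e y w disj
      by (auto simp: Z_def D_def)
    then show ?thesis using rv_graft_rv[OF e v] by (simp add: Z_def D_def t_def d_def)
  qed
  also have "\<dots> = mating_deriv e
      (I3, p3, (I2 - {y}) \<union> I1, subst ((I2 - {y}) \<union> {w}) (rv I2 y w p2) w I1 p1)"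
    by (rule mating_deriv_right[symmetric]) (use fin disj e v pP rv_graft_in in auto)
  finally show ?thesis .
qed

end

definition lin_ext :: "('g \<Rightarrow> 'v) \<Rightarrow> 'g vec \<Rightarrow> 'v" where
  "lin_ext f v = (\<Sum>g\<in>Poly_Mapping.keys v. smul (Poly_Mapping.lookup v g) (f g))"

lemma lin_ext_superset:
  assumes "finite S" "Poly_Mapping.keys v \<subseteq> S"
  shows "lin_ext f v = (\<Sum>g\<in>S. smul (Poly_Mapping.lookup v g) (f g))"
  unfolding lin_ext_def by (rule sum.mono_neutral_left) (use assms in \<open>auto simp: in_keys_iff\<close>)

lemma lin_ext_add: "lin_ext f (a + b) = lin_ext f a + lin_ext f b"
proof -
  let ?S = "Poly_Mapping.keys a \<union> Poly_Mapping.keys b"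
  have "lin_ext f (a + b) = (\<Sum>g\<in>?S. smul (Poly_Mapping.lookup (a + b) g) (f g))"
    by (rule lin_ext_superset) (simp_all add: keys_add)
  also have "\<dots> = (\<Sum>g\<in>?S. smul (Poly_Mapping.lookup a g) (f g))
                + (\<Sum>g\<in>?S. smul (Poly_Mapping.lookup b g) (f g))"
    by (simp add: lookup_add scale_left_distrib sum.distrib)
  also have "\<dots> = lin_ext f a + lin_ext f b"
    by (simp add: lin_ext_superset[of ?S])
  finally show ?thesis .
qed

lemma lin_ext_vscale: "lin_ext f (vscale c a) = smul c (lin_ext f a)"
proof -
  have "lin_ext f (vscale c a) =
      (\<Sum>g\<in>Poly_Mapping.keys a. smul (Poly_Mapping.lookup (vscale c a) g) (f g))"
    by (rule lin_ext_superset) (auto simp: in_keys_iff)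
  then show ?thesis
    by (simp add: lin_ext_def scale_sum_right)
qed

lemma lin_ext_diff: "lin_ext f (a - b) = lin_ext f a - lin_ext f b"
  using lin_ext_add[of f a "vscale (-1) b"] lin_ext_vscale[of f "-1" b]
    by (simp add: vscale_minus_one)

lemma lin_ext_zero [simp]: "lin_ext f 0 = 0"
  by (simp add: lin_ext_def)

lemma lin_ext_gen [simp]: "lin_ext f (gen g) = f g"
  by (simp add: lin_ext_def gen_def)

lemma lin_ext_rspan_zero:
  "a \<in> rspan R \<Longrightarrow> (\<And>r. r \<in> R \<Longrightarrow> lin_ext f r = 0) \<Longrightarrow> lin_ext f a = 0"
  by (induction rule: rspan.induct) (auto simp: lin_ext_add lin_ext_vscale)

lemma mating_deriv_graft_rel:
  assumes "finite I1" "finite I2" "finite I3" "I1 \<inter> I2 = {}" "I1 \<inter> I3 = {}" "I2 \<inter> I3 = {}"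
    and "y \<in> I2" "w \<notin> I1 \<union> I2 \<union> I3" "p1 \<in> P I1" "p2 \<in> P I2" "p3 \<in> P I3"
    and e: "e \<in> (I2 - {y}) \<union> I1 \<union> I3"
  shows "mating_deriv e ((I2 - {y}) \<union> I3, subst I2 p2 y I3 p3, I1, p1)
       = mating_deriv e (I3, p3, (I2 - {y}) \<union> I1, subst ((I2 - {y}) \<union> {w}) (rv I2 y w p2) w I1 p1)"
  using e mating_deriv_graft_rel_I1[OF assms(1-11)] mating_deriv_graft_rel_I2[OF assms(1-11)]
    mating_deriv_graft_rel_I3[OF assms(1-11)]
  by blast

lemma mating_deriv_Q_rels:
  assumes K: "finite K" "e \<in> K" and r: "r \<in> Q_rels smul P subst rv K"
  shows "lin_ext (mating_deriv e) r = 0"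
  using r unfolding Q_rels_def
proof (elim UnE CollectE exE conjE)
  fix I p q J p' assume h: "r = gen (I, p + q, J, p') - gen (I, p, J, p') - gen (I, q, J, p')"
    "qgen_ok P K (I, p, J, p')" "q \<in> P I"
  show ?thesis using mating_deriv_add_left[OF h(2,3) K(2)] by (simp add: h(1) lin_ext_diff)
next
  fix I p J p' c assume h: "r = gen (I, smul c p, J, p') - vscale c (gen (I, p, J, p'))"
    "qgen_ok P K (I, p, J, p')"
  show ?thesis using mating_deriv_scale_left[OF h(2) K(2)]
    by (simp add: h(1) lin_ext_diff lin_ext_vscale)
next
  fix I p J p' q' assume h: "r = gen (I, p, J, p' + q') - gen (I, p, J, p') - gen (I, p, J, q')"
    "qgen_ok P K (I, p, J, p')" "q' \<in> P J"
  show ?thesis using mating_deriv_add_right[OF h(2,3) K(2)] by (simp add: h(1) lin_ext_diff)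
next
  fix I p J p' c assume h: "r = gen (I, p, J, smul c p') - vscale c (gen (I, p, J, p'))"
    "qgen_ok P K (I, p, J, p')"
  show ?thesis using mating_deriv_scale_right[OF h(2) K(2)]
    by (simp add: h(1) lin_ext_diff lin_ext_vscale)
next
  fix I p J p' assume h: "r = gen (I, p, J, p') - gen (J, p', I, p)" "qgen_ok P K (I, p, J, p')"
  have "I \<inter> J = {}" "e \<in> I \<union> J" using h(2) K by (auto simp: qgen_ok_def)
  then show ?thesis using mating_deriv_swap[of I J e p' p] by (simp add: h(1) lin_ext_diff)
next
  fix I1 I2 I3 p1 p2 p3 y w
  assume h: "r = gen ((I2 - {y}) \<union> I3, subst I2 p2 y I3 p3, I1, p1)
        - gen (I3, p3, (I2 - {y}) \<union> I1, subst ((I2 - {y}) \<union> {w}) (rv I2 y w p2) w I1 p1)"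
    "finite I1" "finite I2" "finite I3" "I1 \<inter> I2 = {}" "I1 \<inter> I3 = {}" "I2 \<inter> I3 = {}"
    "y \<in> I2" "w \<notin> I1 \<union> I2 \<union> I3" "(I2 - {y}) \<union> I1 \<union> I3 = K"
    "p1 \<in> P I1" "p2 \<in> P I2" "p3 \<in> P I3"
  show ?thesis
    using mating_deriv_graft_rel[OF h(2-9) h(11-13)] h(10) K by (simp add: h(1) lin_ext_diff)
qed

lemma mating_deriv_Q_rel:
  assumes "finite K" "e \<in> K" "r \<in> Q_rel smul P subst rv K"
  shows "lin_ext (mating_deriv e) r = 0"
  using assms(3) unfolding Q_rel_def
    by (rule lin_ext_rspan_zero) (rule mating_deriv_Q_rels[OF assms(1,2)])

lemma Q_rels_addI:
  "qgen_ok P K (I, p, J, p') \<Longrightarrow> q \<in> P I \<Longrightarrow>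
    gen (I, p + q, J, p') - gen (I, p, J, p') - gen (I, q, J, p') \<in> Q_rels smul P subst rv K"
  unfolding Q_rels_def by (intro UnI1 CollectI exI conjI refl) auto

lemma Q_rels_scaleI:
  "qgen_ok P K (I, p, J, p') \<Longrightarrow> gen (I, smul c p, J, p') - vscale c (gen (I, p, J, p'))
      \<in> Q_rels smul P subst rv K"
  unfolding Q_rels_def by (intro UnI1 UnI2 CollectI exI conjI refl) auto

lemma Q_rels_swapI: "qgen_ok P K (I, p, J, q) \<Longrightarrow> gen (I, p, J, q) - gen (J, q, I, p)
    \<in> Q_rels smul P subst rv K"
  unfolding Q_rels_def by blast

lemma Q_rels_graftI:
  assumes "finite I1" "finite I2" "finite I3" "I1 \<inter> I2 = {}" "I1 \<inter> I3 = {}" "I2 \<inter> I3 = {}"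
    "y \<in> I2" "w \<notin> I1 \<union> I2 \<union> I3" "(I2 - {y}) \<union> I1 \<union> I3 = K"
    "p1 \<in> P I1" "p2 \<in> P I2" "p3 \<in> P I3"
  shows "gen ((I2 - {y}) \<union> I3, subst I2 p2 y I3 p3, I1, p1)
        - gen (I3, p3, (I2 - {y}) \<union> I1, subst ((I2 - {y}) \<union> {w}) (rv I2 y w p2) w I1 p1)
     \<in> Q_rels smul P subst rv K"
  unfolding Q_rels_def by (rule UnI2) (use assms in blast)

lemma Q_rels_unit_mating:
  assumes ok: "qgen_ok P K (I, p, J, q)" and e: "e \<in> J"
  shows "gen (J, q, I, p) - gen ({e}, u e, K - {e}, mating_deriv e (I, p, J, q))
      \<in> Q_rels smul P subst rv K"
proof -
  from ok have a: "finite I" "finite J" "I \<inter> J = {}" "I \<union> J = K" "p \<in> P I" "q \<in> P J"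
    by (auto simp: qgen_ok_def)
  obtain y where y: "y \<notin> K" using fresh_exists a by blast
  obtain w where w: "w \<notin> K \<union> {y}" using fresh_exists[of "K \<union> {y}"] a by auto
  \<comment> \<open>write \<open>q\<close> as \<open>u\<^sub>e\<close> grafted into a copy of \<open>q\<close> with \<open>e\<close> renamed to \<open>y\<close>\<close>
  define s where "s = id(e := y)"
  define I2 where "I2 = (J - {e}) \<union> {y}"
  define p2 where "p2 = ren s J q"
  have injs: "inj_on s (J \<union> {w})" using y w a e by (auto simp: s_def inj_on_def)
  have sJ: "s ` J = I2" using e by (auto simp: s_def I2_def)
  have p2P: "p2 \<in> P I2" unfolding p2_def sJ[symmetric]
    by (rule ren_closed) (use a injs in \<open>auto intro: inj_on_subset\<close>)
  have I2: "finite I2" "y \<in> I2" "e \<notin> I2" using y e a by (auto simp: I2_def)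
  have rel: "gen ((I2 - {y}) \<union> {e}, subst I2 p2 y {e} (u e), I, p)
        - gen ({e}, u e, (I2 - {y}) \<union> I, subst ((I2 - {y}) \<union> {w}) (rv I2 y w p2) w I p)
     \<in> Q_rels smul P subst rv K"
    by (rule Q_rels_graftI) (use a e y w I2 p2P u_in in \<open>auto simp: I2_def\<close>)
  have "subst I2 p2 y {e} (u e) = ren (id(y := e)) I2 p2"
    by (rule unit_right) (use I2 p2P in auto)
  also have "\<dots> = ren (id(y := e) \<circ> s) J q"
    unfolding p2_def sJ[symmetric]
      by (rule ren_comp[symmetric]) (use a injs y in \<open>auto simp: inj_on_def s_def\<close>)
  also have "\<dots> = q"
    by (rule ren_id_on) (use a y e in \<open>auto simp: s_def\<close>)
  finally have unit: "subst I2 p2 y {e} (u e) = q" .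
  have rv_p2: "rv I2 y w p2 = rv J e w q"
  proof -
    have "ren s ((J - {e}) \<union> {w}) (rv J e w q) = rv (s ` J) (s e) (s w) (ren s J q)"
      by (rule rev_ren) (use a e w injs in auto)
    moreover have "ren s ((J - {e}) \<union> {w}) (rv J e w q) = rv J e w q"
      by (rule ren_id_on) (use a e w y rev_closed in \<open>auto simp: s_def\<close>)
    moreover have "s e = y" "s w = w" using w e a by (auto simp: s_def)
    ultimately show ?thesis by (simp add: sJ p2_def)
  qed
  have "subst ((J - {e}) \<union> {w}) (rv J e w q) w I p = mating_deriv e (I, p, J, q)"
    by (rule mating_deriv_right[symmetric]) (use a e w in auto)
  moreover have "(I2 - {y}) \<union> {e} = J" "(I2 - {y}) \<union> I = K - {e}"
    "(I2 - {y}) \<union> {w} = (J - {e}) \<union> {w}"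
    using e y a w by (auto simp: I2_def)
  ultimately show ?thesis using rel unit rv_p2 by simp
qed

lemma Q_rel_deriv_unit:
  assumes ok: "qgen_ok P K (I, p, J, q)" and e: "e \<in> K"
  shows "gen (I, p, J, q) - gen (K - {e}, mating_deriv e (I, p, J, q), {e}, u e)
      \<in> Q_rel smul P subst rv K"
proof -
  from ok have a: "I \<inter> J = {}" "I \<union> J = K" by (auto simp: qgen_ok_def)
  define d where "d = mating_deriv e (I, p, J, q)"
  define U where "U = gen ({e}, u e, K - {e}, d)"
  have "qgen_ok P K (K - {e}, d, {e}, u e)"
    using ok e mating_deriv_in[OF ok e] u_in by (auto simp: qgen_ok_def d_def)
  then have unit_swap: "gen (K - {e}, d, {e}, u e) - U \<in> Q_rel smul P subst rv K"
    unfolding Q_rel_def U_def by (intro rspan.base Q_rels_swapI)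
  have "gen (I, p, J, q) - U \<in> Q_rel smul P subst rv K"
  proof (cases "e \<in> J")
    case True
    have "gen (I, p, J, q) - gen (J, q, I, p) \<in> Q_rel smul P subst rv K"
      "gen (J, q, I, p) - U \<in> Q_rel smul P subst rv K"
      unfolding Q_rel_def U_def d_def using ok True
        by (auto intro: rspan.base Q_rels_swapI Q_rels_unit_mating)
    then show ?thesis unfolding Q_rel_def using rspan.add by fastforce
  next
    case False
    then have "e \<in> I" using a e by auto
    moreover have "mating_deriv e (J, q, I, p) = d" unfolding d_def using a e
      by (intro mating_deriv_swap) auto
    ultimately show ?thesis
      unfolding Q_rel_def U_def using Q_rels_unit_mating[OF qgen_ok_swap[OF ok]]
        by (auto intro: rspan.base)
  qed
  then show ?thesis
    using rspan_diff unit_swap unfolding Q_rel_def d_def by fastforce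
qed

lemma mating_deriv_unit:
  assumes "finite K'" "e \<notin> K'" "d \<in> P K'"
  shows "mating_deriv e (K', d, {e}, u e) = d"
proof -
  obtain w where w: "w \<notin> K' \<union> {e}" using fresh_exists[of "K' \<union> {e}"] assms by auto
  have "mating_deriv e (K', d, {e}, u e) = subst (({e} - {e}) \<union> {w}) (rv {e} e w (u e)) w K' d"
    by (rule mating_deriv_right) (use assms w u_in in auto)
  also have "\<dots> = subst {w} (u w) w K' d" using rv_unit[of e w] w by simp
  also have "\<dots> = d" by (rule unit_left) (use assms w in auto)
  finally show ?thesis .
qed

lemma Q_deriv_gen:
  assumes ok: "qgen_ok P K g" and e: "e \<in> K"
  shows "Q_deriv smul P subst rv u K e (gen g) = mating_deriv e g"
  unfolding Q_deriv_def
proof (rule the_equality)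
  obtain I p J q where g: "g = (I, p, J, q)" by (cases g)
  show "mating_deriv e g \<in> P (K - {e})
      \<and> gen g - gen (K - {e}, mating_deriv e g, {e}, u e) \<in> Q_rel smul P subst rv K"
    using mating_deriv_in[OF ok e] Q_rel_deriv_unit[OF ok[unfolded g] e] g by simp
next
  fix d assume d: "d \<in> P (K - {e}) \<and> gen g - gen (K - {e}, d, {e}, u e) \<in> Q_rel smul P subst rv K"
  have fK: "finite K" using ok by (cases g) (auto simp: qgen_ok_def)
  have "lin_ext (mating_deriv e) (gen g - gen (K - {e}, d, {e}, u e)) = 0"
    by (rule mating_deriv_Q_rel[OF fK e]) (use d in auto)
  then have "mating_deriv e g = mating_deriv e (K - {e}, d, {e}, u e)" by (simp add: lin_ext_diff)
  also have "\<dots> = d" by (rule mating_deriv_unit) (use fK d in auto)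
  finally show "d = mating_deriv e g" by simp
qed

lemma mating_deriv_ren_left:
  assumes ok: "qgen_ok P K (I, p, J, q)" and e: "e \<in> I" and t: "inj_on t K"
  shows "mating_deriv (t e) (t ` I, ren t I p, t ` J, ren t J q)
      = ren t (K - {e}) (mating_deriv e (I, p, J, q))"
proof -
  from ok have a: "finite I" "finite J" "I \<inter> J = {}" "I \<union> J = K" "p \<in> P I" "q \<in> P J"
    by (auto simp: qgen_ok_def)
  obtain w where w: "w \<notin> K" using fresh_exists a by blast
  obtain w' where w': "w' \<notin> t ` K" using fresh_exists[of "t ` K"] a by auto
  define t' where "t' = t(w := w')"
  have t': "inj_on t' (K \<union> {w})" using t w w' unfolding t'_def inj_on_def by (auto simp: image_iff)
  have t'_eq: "t' ` I = t ` I" "t' ` J = t ` J" "t' e = t e" "t' w = w'"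
    "t' ` ((I - {e}) \<union> {w}) = (t ` I - {t e}) \<union> {w'}"
    using a w e t inj_on_image_set_diff[of t K I "{e}"] by (auto simp: t'_def)
  have ren_eq: "ren t' I p = ren t I p" "ren t' J q = ren t J q"
    by (rule ren_cong; use a w in \<open>auto simp: t'_def\<close>)+
  have wIJ: "w \<notin> I \<union> J" using w a by auto
  have "ren t (K - {e}) (mating_deriv e (I, p, J, q))
      = ren t' (K - {e}) (mating_deriv e (I, p, J, q))"
    by (rule ren_cong) (use a w mating_deriv_in[OF ok] e in \<open>auto simp: t'_def\<close>)
  also have "\<dots> = ren t' ((((I - {e}) \<union> {w}) - {w}) \<union> J)
      (subst ((I - {e}) \<union> {w}) (rv I e w p) w J q)"
  proof -
    have "(((I - {e}) \<union> {w}) - {w}) \<union> J = K - {e}" using a e w by auto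
    then show ?thesis using mating_deriv_left[OF a(1-3) e wIJ a(5,6)] by simp
  qed
  also have "\<dots> = subst (t' ` ((I - {e}) \<union> {w})) (ren t' ((I - {e}) \<union> {w}) (rv I e w p)) (t' w)
                    (t' ` J) (ren t' J q)"
    by (rule subst_ren) (use a e w t' rev_closed in \<open>auto intro: inj_on_subset\<close>)
  also have "ren t' ((I - {e}) \<union> {w}) (rv I e w p) = rv (t' ` I) (t' e) (t' w) (ren t' I p)"
    by (rule rev_ren) (use a e wIJ t' in \<open>auto intro: inj_on_subset\<close>)
  also have "subst (t' ` ((I - {e}) \<union> {w})) (rv (t' ` I) (t' e) (t' w) (ren t' I p)) (t' w)
      (t' ` J) (ren t' J q)
      = mating_deriv (t e) (t ` I, ren t I p, t ` J, ren t J q)"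
    unfolding t'_eq ren_eq
  proof (rule mating_deriv_left[symmetric])
    show "ren t I p \<in> P (t ` I)" "ren t J q \<in> P (t ` J)"
      using ren_closed a inj_on_subset[OF t] by auto
    show "t ` I \<inter> t ` J = {}" using inj_on_image_Int[of t K I J] t a by auto
  qed (use a e w' in auto)
  finally show ?thesis ..
qed

lemma mating_deriv_ren:
  assumes ok: "qgen_ok P K (I, p, J, q)" and e: "e \<in> K" and t: "inj_on t K"
  shows "mating_deriv (t e) (t ` I, ren t I p, t ` J, ren t J q)
      = ren t (K - {e}) (mating_deriv e (I, p, J, q))"
proof (cases "e \<in> I")
  case False
  from ok have a: "I \<inter> J = {}" "I \<union> J = K" by (auto simp: qgen_ok_def)
  have eJ: "e \<in> J" using False e a by auto
  have "t ` I \<inter> t ` J = {}" using inj_on_image_Int[of t K I J] t a by auto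
  then have "mating_deriv (t e) (t ` I, ren t I p, t ` J, ren t J q)
      = mating_deriv (t e) (t ` J, ren t J q, t ` I, ren t I p)"
    using eJ by (intro mating_deriv_swap[symmetric]) auto
  also have "\<dots> = ren t (K - {e}) (mating_deriv e (J, q, I, p))"
    using mating_deriv_ren_left[OF qgen_ok_swap[OF ok] eJ t] .
  also have "mating_deriv e (J, q, I, p) = mating_deriv e (I, p, J, q)"
    using a e by (intro mating_deriv_swap) auto
  finally show ?thesis .
qed (use mating_deriv_ren_left[OF ok _ t] in auto)

lemma mating_deriv_rv_left:
  assumes ok: "qgen_ok P K (I, p, J, q)" and aI: "a \<in> I" and c: "c \<in> K" and ac: "a \<noteq> c"
  shows "mating_deriv c (I, p, J, q) = rv (K - {a}) c a (mating_deriv a (I, p, J, q))"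
proof -
  from ok have x: "finite I" "finite J" "I \<inter> J = {}" "I \<union> J = K" "p \<in> P I" "q \<in> P J"
    by (auto simp: qgen_ok_def)
  obtain w where w: "w \<notin> K" using fresh_exists x by blast
  have wIJ: "w \<notin> I \<union> J" using w x by auto
  define I' where "I' = (I - {a}) \<union> {w}"
  define r where "r = rv I a w p"
  have rP: "r \<in> P I'" unfolding r_def I'_def using rev_closed x aI wIJ by auto
  have ph: "mating_deriv a (I, p, J, q) = subst I' r w J q"
    unfolding I'_def r_def by (rule mating_deriv_left) (use x aI wIJ in auto)
  have KI: "K - {a} = (I' - {w}) \<union> J" using x aI w by (auto simp: I'_def)
  show ?thesis
  proof (cases "c \<in> I")
    case True
    have "rv ((I' - {w}) \<union> J) c a (subst I' r w J q) = subst ((I' - {c}) \<union> {a}) (rv I' c a r) w J q"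
      by (rule rev_subst1) (use x aI w wIJ True ac rP in \<open>auto simp: I'_def\<close>)
    moreover have "rv I' c a r = rv I c w p"
      unfolding I'_def r_def by (rule rev_trans) (use x aI True ac wIJ in auto)
    moreover have "(I' - {c}) \<union> {a} = (I - {c}) \<union> {w}" using aI True ac w x by (auto simp: I'_def)
    moreover have "mating_deriv c (I, p, J, q) = subst ((I - {c}) \<union> {w}) (rv I c w p) w J q"
      by (rule mating_deriv_left) (use x True wIJ in auto)
    ultimately show ?thesis using ph KI by simp
  next
    case False
    then have cJ: "c \<in> J" using c x by auto
    have "rv ((I' - {w}) \<union> J) c a (subst I' r w J q)
        = subst ((J - {c}) \<union> {w}) (rv J c w q) w ((I' - {w}) \<union> {a}) (rv I' w a r)"
      by (rule rev_subst2) (use x aI w wIJ cJ ac rP in \<open>auto simp: I'_def\<close>)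
    moreover have "rv I' w a r = p"
      unfolding I'_def r_def by (rule rev_inv) (use x aI wIJ in auto)
    moreover have "(I' - {w}) \<union> {a} = I" using aI w x by (auto simp: I'_def)
    moreover have "mating_deriv c (I, p, J, q) = subst ((J - {c}) \<union> {w}) (rv J c w q) w I p"
      by (rule mating_deriv_right) (use x cJ wIJ in auto)
    ultimately show ?thesis using ph KI by simp
  qed
qed

lemma mating_deriv_rv:
  assumes ok: "qgen_ok P K g" and a: "a \<in> K" and c: "c \<in> K" and ac: "a \<noteq> c"
  shows "mating_deriv c g = rv (K - {a}) c a (mating_deriv a g)"
proof -
  obtain I p J q where g: "g = (I, p, J, q)" by (cases g)
  from ok have x: "I \<inter> J = {}" "I \<union> J = K" by (auto simp: qgen_ok_def g)
  show ?thesis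
  proof (cases "a \<in> I")
    case False
    then have aJ: "a \<in> J" using a x by auto
    have "mating_deriv c (J, q, I, p) = rv (K - {a}) c a (mating_deriv a (J, q, I, p))"
      using mating_deriv_rv_left[OF qgen_ok_swap[OF ok[unfolded g]] aJ c ac] .
    moreover have "mating_deriv c (J, q, I, p) = mating_deriv c (I, p, J, q)"
      "mating_deriv a (J, q, I, p) = mating_deriv a (I, p, J, q)"
      using x a c by (auto intro: mating_deriv_swap)
    ultimately show ?thesis using g by simp
  qed (use mating_deriv_rv_left[OF ok[unfolded g] _ c ac] g in simp)
qed

end

section \<open>The bracket on generators\<close>

definition labels :: "'v qagen \<Rightarrow> nat set" where
  "labels G = (case fst G of (I, p, J, q) \<Rightarrow> I \<union> J)"

definition shift :: "nat set \<Rightarrow> nat \<Rightarrow> nat" where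
  "shift I z = z + Suc (Max I)"

lemma less_shift: "finite I \<Longrightarrow> x \<in> I \<Longrightarrow> x < shift I z"
  unfolding shift_def using Max_ge[of I x] by linarith

lemma shift_notin: "finite I \<Longrightarrow> shift I z \<notin> I"
  using less_shift by blast

lemma shift_disjoint: "finite I \<Longrightarrow> I \<inter> shift I ` J = {}"
  using shift_notin by auto

lemma inj_shift: "inj (shift I)"
  by (simp add: shift_def inj_on_def)

definition sympl :: "nat \<Rightarrow> vb \<Rightarrow> vb \<Rightarrow> rat" where
  "sympl n x y = (\<Sum>i\<in>{1..n}. (if x = Pv i \<and> y = Qv i then 1 else 0)
      - (if x = Qv i \<and> y = Pv i then 1 else 0))"

lemma sympl_antisym: "sympl n y x = - sympl n x y"
  unfolding sympl_def sum_negf[symmetric] by (rule sum.cong) auto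

lemma restrict_inv_into_eq:
  assumes "inj_on s K" "lam' \<in> extensional (s ` K)" "\<And>x. x \<in> K \<Longrightarrow> lam' (s x) = lam x"
  shows "restrict (lam \<circ> the_inv_into K s) (s ` K) = lam'"
proof
  fix z show "restrict (lam \<circ> the_inv_into K s) (s ` K) z = lam' z"
  proof (cases "z \<in> s ` K")
    case True
    then obtain x where "x \<in> K" "z = s x" by auto
    then show ?thesis using assms the_inv_into_f_f[OF assms(1)] by simp
  qed (use assms(2) in \<open>simp add: extensional_def\<close>)
qed

lemma qagen_okD:
  assumes "qagen_ok P n ((I, p, J, q), lam)"
  shows "finite I" "finite J" "I \<inter> J = {}" "p \<in> P I" "q \<in> P J" "2 \<le> card (I \<union> J)"
    "lam \<in> (I \<union> J) \<rightarrow>\<^sub>E Vbasis n" "qgen_ok P (I \<union> J) (I, p, J, q)"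
  using assms by (auto simp: qagen_ok_def qgen_ok_def)

lemma qagen_ok_labels:
  assumes "qagen_ok P n G"
  shows "finite (labels G)" "qgen_ok P (labels G) (fst G)" "snd G \<in> labels G \<rightarrow>\<^sub>E Vbasis n"
  using assms by (cases G; auto simp: labels_def qagen_ok_def qgen_ok_def)+

lemma pagen_okD:
  assumes "pagen_ok P n (I, p, lam)"
  shows "finite I" "I \<noteq> {}" "p \<in> P I" "lam \<in> I \<rightarrow>\<^sub>E Vbasis n"
  using assms by (auto simp: pagen_ok_def)

locale QA_setting = reversible_operad smul P ren subst rv u
  for smul :: "rat \<Rightarrow> 'v::ab_group_add \<Rightarrow> 'v" and P ren subst rv u +
  fixes n :: nat
begin

abbreviation "QA \<equiv> QA_space P n"
abbreviation "Rel \<equiv> QA_rel smul P ren subst rv n"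
abbreviation "br \<equiv> bracket smul P ren subst rv u n"

text \<open>The summand of \<open>\<partial>G/\<partial>x\<close> coming from the label \<open>a\<close> (with \<open>\<lambda> a = x\<close>), and the generator
  \<open>p \<otimes> p'\<close> of \<open>QA\<^sub>n\<close>, with the labels of \<open>p'\<close> shifted past those of \<open>p\<close>.\<close>

definition deriv_at :: "'v qagen \<Rightarrow> nat \<Rightarrow> 'v pagen" where
  "deriv_at G a = (labels G - {a}, mating_deriv a (fst G), restrict (snd G) (labels G - {a}))"

definition tens :: "'v pagen \<Rightarrow> 'v pagen \<Rightarrow> 'v qagen" where
  "tens x y = (case (x, y) of ((I, p, lam), (J, q, mu)) \<Rightarrow>
     ((I, p, shift I ` J, ren (shift I) J q),
      restrict (\<lambda>z. if z \<in> I then lam z else mu (z - Suc (Max I))) (I \<union> shift I ` J)))"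

lemma deriv_at_simp:
  "deriv_at ((I, p, J, q), lam) a
      = ((I \<union> J) - {a}, mating_deriv a (I, p, J, q), restrict lam ((I \<union> J) - {a}))"
  by (simp add: deriv_at_def labels_def)

lemma fst_deriv_at: "fst (deriv_at G a) = labels G - {a}"
  by (simp add: deriv_at_def)

lemma tens_simp:
  "tens (I, p, lam) (J, q, mu) = ((I, p, shift I ` J, ren (shift I) J q),
      restrict (\<lambda>z. if z \<in> I then lam z else mu (z - Suc (Max I))) (I \<union> shift I ` J))"
  by (simp add: tens_def)

lemma tens_labelling_left: "z \<in> I \<Longrightarrow> snd (tens (I, p, lam) (J, q, mu)) z = lam z"
  by (simp add: tens_simp)

lemma tens_labelling_right:
  "finite I \<Longrightarrow> j \<in> J \<Longrightarrow> snd (tens (I, p, lam) (J, q, mu)) (shift I j) = mu j"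
  using shift_notin[of I j] by (simp add: tens_simp) (simp add: shift_def)

lemma labels_tens: "labels (tens (I, p, lam) (J, q, mu)) = I \<union> shift I ` J"
  by (simp add: tens_simp labels_def)

lemma tens_gen_eq:
  "pagen_ok P n x \<Longrightarrow> pagen_ok P n y \<Longrightarrow> tens_gen P ren n x y = gen (tens x y)"
  by (cases x; cases y) (simp add: tens_gen_def tens_def Let_def shift_def[abs_def])

lemma deriv_at_ok:
  assumes G: "qagen_ok P n G" and a: "a \<in> labels G"
  shows "pagen_ok P n (deriv_at G a)"
proof -
  note G' = qagen_ok_labels[OF G]
  have "card (labels G - {a}) \<ge> 1" using G a
    by (cases G) (auto simp: labels_def qagen_ok_def card_Diff_singleton)
  then show ?thesis
    using G' mating_deriv_in[OF G'(2) a] by (auto simp: deriv_at_def pagen_ok_def PiE_def Pi_def)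
qed

lemma tens_ok:
  assumes x: "pagen_ok P n (I, p, lam)" and y: "pagen_ok P n (J, q, mu)"
  shows "qagen_ok P n (tens (I, p, lam) (J, q, mu))"
proof -
  note x' = pagen_okD[OF x] and y' = pagen_okD[OF y]
  have disj: "I \<inter> shift I ` J = {}" using shift_disjoint[OF x'(1)] .
  have "card (I \<union> shift I ` J) = card I + card J"
    using card_Un_disjoint[OF x'(1) _ disj] card_image[OF inj_on_subset[OF inj_shift]] y'(1) by auto
  moreover have "card I \<ge> 1" "card J \<ge> 1" using x' y' by (auto simp: Suc_le_eq card_gt_0_iff)
  moreover have "ren (shift I) J q \<in> P (shift I ` J)"
    using ren_closed[OF y'(1) inj_on_subset[OF inj_shift] y'(3)] by simp
  ultimately show ?thesis
    using x' y' disj by (auto simp: tens_simp qagen_ok_def qgen_ok_def PiE_def Pi_def shift_def)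
qed

lemma QA_deriv_gen:
  assumes G: "qagen_ok P n G"
  shows "QA_deriv smul P subst rv u n x (gen G)
       = (\<Sum>a\<in>labels G. vscale (if snd G a = x then 1 else 0) (gen (deriv_at G a)))"
proof -
  obtain I p J q lam where g: "G = ((I, p, J, q), lam)" by (cases G) auto
  note G' = qagen_okD[OF G[unfolded g]]
  have "QA_deriv smul P subst rv u n x (gen G) = (\<Sum>a\<in>{a \<in> I \<union> J. lam a = x}. gen (deriv_at G a))"
    unfolding QA_deriv_def lext_gen deriv_gen_def using G
    by (simp add: g deriv_at_simp Q_deriv_gen[OF G'(8)])
  also have "\<dots> = (\<Sum>a\<in>I \<union> J. if lam a = x then gen (deriv_at G a) else 0)"
    by (rule sum.inter_filter) (use G' in auto)
  finally show ?thesis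
    by (auto simp: g labels_def intro: sum.cong)
qed

lemma PA_tens_sums:
  assumes "finite S" "finite S'" "\<And>a. a \<in> S \<Longrightarrow> pagen_ok P n (x a)" "\<And>b. b \<in> S' \<Longrightarrow> pagen_ok P n (y b)"
  shows "PA_tens P ren n (\<Sum>a\<in>S. vscale (c a) (gen (x a))) (\<Sum>b\<in>S'. vscale (d b) (gen (y b)))
       = (\<Sum>a\<in>S. \<Sum>b\<in>S'. vscale (c a * d b) (gen (tens (x a) (y b))))"
  unfolding PA_tens_def
  using assms by (simp add: lext_sum lext_vscale vscale_sum_right vscale_vscale tens_gen_eq)

lemma bracket_gen:
  assumes G: "qagen_ok P n G" and H: "qagen_ok P n H"
  shows "br (gen G) (gen H)
       = (\<Sum>a\<in>labels G. \<Sum>b\<in>labels H. vscale (sympl n (snd G a) (snd H b))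
           (gen (tens (deriv_at G a) (deriv_at H b))))"
proof -
  let ?T = "\<lambda>a b. gen (tens (deriv_at G a) (deriv_at H b))"
  let ?ind = "\<lambda>P. if P then 1 else (0::rat)"
  let ?c = "\<lambda>i a b. ?ind (snd G a = Pv i) * ?ind (snd H b = Qv i)
      - ?ind (snd G a = Qv i) * ?ind (snd H b = Pv i)"
  have mult_indicators: "\<And>A B. ?ind A * ?ind B = ?ind (A \<and> B)" by simp
  have fin: "finite (labels G)" "finite (labels H)"
    using qagen_ok_labels(1)[OF G] qagen_ok_labels(1)[OF H] .
  have ok: "\<And>a. a \<in> labels G \<Longrightarrow> pagen_ok P n (deriv_at G a)" "\<And>b. b \<in> labels H
      \<Longrightarrow> pagen_ok P n (deriv_at H b)"
    using deriv_at_ok G H by auto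
  have "br (gen G) (gen H) = (\<Sum>i\<in>{1..n}. \<Sum>a\<in>labels G. \<Sum>b\<in>labels H. vscale (?c i a b) (?T a b))"
    unfolding bracket_def QA_deriv_gen[OF G] QA_deriv_gen[OF H]
    by (simp only: PA_tens_sums[OF fin ok]) (simp add: sum_subtractf vscale_diff_left)
  also have "\<dots> = (\<Sum>a\<in>labels G. \<Sum>b\<in>labels H. \<Sum>i\<in>{1..n}. vscale (?c i a b) (?T a b))"
    by (subst sum.swap) (rule sum.cong[OF refl], rule sum.swap)
  also have "\<dots> = (\<Sum>a\<in>labels G. \<Sum>b\<in>labels H. vscale (sympl n (snd G a) (snd H b)) (?T a b))"
    using mult_indicators by (simp add: sympl_def vscale_sum_left[symmetric])
  finally show ?thesis .
qed

lemma QA_deriv_add: "QA_deriv smul P subst rv u n x (F + G) = QA_deriv smul P subst rv u n x F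
    + QA_deriv smul P subst rv u n x G"
  by (simp add: QA_deriv_def lext_add)

lemma QA_deriv_vscale: "QA_deriv smul P subst rv u n x (vscale c F)
    = vscale c (QA_deriv smul P subst rv u n x F)"
  by (simp add: QA_deriv_def lext_vscale)

lemma br_add_left: "br (F + F') H = br F H + br F' H"
  by (simp add: bracket_def QA_deriv_add PA_tens_def lext_add sum.distrib[symmetric] algebra_simps)

lemma br_add_right: "br H (F + F') = br H F + br H F'"
  by (simp add: bracket_def QA_deriv_add PA_tens_def lext_add lext_fun_add sum.distrib[symmetric]
      algebra_simps)

lemma br_vscale_left: "br (vscale c F) H = vscale c (br F H)"
  by (simp add: bracket_def QA_deriv_vscale PA_tens_def lext_vscale vscale_sum_right
      vscale_diff_right)

lemma br_vscale_right: "br H (vscale c F) = vscale c (br H F)"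
  by (simp add: bracket_def QA_deriv_vscale PA_tens_def lext_vscale lext_fun_vscale vscale_sum_right
      vscale_diff_right)

lemma br_diff_left: "br (F - F') H = br F H - br F' H"
  using br_add_left[of F "vscale (-1) F'" H] br_vscale_left[of "-1" F' H]
    by (simp add: vscale_minus_one)

lemma br_diff_right: "br H (F - F') = br H F - br H F'"
  using br_add_right[of H F "vscale (-1) F'"] br_vscale_right[of H "-1" F']
    by (simp add: vscale_minus_one)

lemma br_zero_left [simp]: "br 0 H = 0"
  using br_vscale_left[of 0 0 H] by simp

lemma br_zero_right [simp]: "br H 0 = 0"
  using br_vscale_right[of H 0 0] by simp

lemma br_sum_left: "br (sum f S) H = (\<Sum>x\<in>S. br (f x) H)"
  by (induction S rule: infinite_finite_induct) (auto simp: br_add_left)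

lemma br_sum_right: "br H (sum f S) = (\<Sum>x\<in>S. br H (f x))"
  by (induction S rule: infinite_finite_induct) (auto simp: br_add_right)

lemma Rel_zero: "0 \<in> Rel"
  unfolding QA_rel_def by (rule rspan.zero)

lemma Rel_add: "a \<in> Rel \<Longrightarrow> b \<in> Rel \<Longrightarrow> a + b \<in> Rel"
  unfolding QA_rel_def by (rule rspan.add)

lemma Rel_diff: "a \<in> Rel \<Longrightarrow> b \<in> Rel \<Longrightarrow> a - b \<in> Rel"
  unfolding QA_rel_def by (rule rspan_diff)

lemma Rel_vscale: "a \<in> Rel \<Longrightarrow> vscale c a \<in> Rel"
  unfolding QA_rel_def by (rule rspan.scale)

lemma Rel_sum: "(\<And>x. x \<in> S \<Longrightarrow> f x \<in> Rel) \<Longrightarrow> sum f S \<in> Rel"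
  unfolding QA_rel_def by (rule rspan_sum)

lemma Rel_trans: "a - b \<in> Rel \<Longrightarrow> b - c \<in> Rel \<Longrightarrow> a - c \<in> Rel"
  using Rel_add[of "a - b" "b - c"] by simp

lemma Rel_relabel:
  assumes ok: "qagen_ok P n ((I, p, J, q), lam)" and t: "inj_on t (I \<union> J)"
    and e: "I' = t ` I" "J' = t ` J" "p' = ren t I p" "q' = ren t J q"
    and l: "lam' \<in> extensional (I' \<union> J')" "\<And>x. x \<in> I \<union> J \<Longrightarrow> lam' (t x) = lam x"
  shows "gen ((I, p, J, q), lam) - gen ((I', p', J', q'), lam') \<in> Rel"
proof -
  have "restrict (lam \<circ> the_inv_into (I \<union> J) t) (t ` (I \<union> J)) = lam'"
    by (rule restrict_inv_into_eq) (use t l e in \<open>auto simp: image_Un\<close>)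
  then have "gen ((I, p, J, q), lam) - gen ((I', p', J', q'), lam') \<in> QA_rels smul P ren subst rv n"
    unfolding QA_rels_def using ok t e by blast
  then show ?thesis unfolding QA_rel_def by (rule rspan.base)
qed

lemma tag_gen: "tag lam (gen g) = gen (g, lam)"
  by (simp add: tag_def)

lemma tag_diff: "tag lam (a - b) = tag lam a - tag lam b"
  by (simp add: tag_def lext_diff)

lemma tag_Q_rel:
  assumes "finite K" "2 \<le> card K" "lam \<in> K \<rightarrow>\<^sub>E Vbasis n" "r \<in> Q_rel smul P subst rv K"
  shows "tag lam r \<in> Rel"
  using assms(4) unfolding Q_rel_def QA_rel_def
proof (rule rspan_linear[where L = "tag lam"])
  fix x assume "x \<in> Q_rels smul P subst rv K"
  then have "tag lam x \<in> QA_rels smul P ren subst rv n"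
    unfolding QA_rels_def using assms(1-3) by blast
  then show "tag lam x \<in> rspan (QA_rels smul P ren subst rv n)" by (rule rspan.base)
qed (simp_all add: tag_def lext_add lext_vscale)

lemma tag_Q_rel_gen:
  assumes "qagen_ok P n ((I, p, J, q), lam)"
    and "gen (I, p, J, q) - gen (I', p', J', q') \<in> Q_rel smul P subst rv (I \<union> J)"
  shows "gen ((I, p, J, q), lam) - gen ((I', p', J', q'), lam) \<in> Rel"
  using tag_Q_rel[OF _ _ _ assms(2)] qagen_okD[OF assms(1)] by (simp add: tag_diff tag_gen)

lemma Rel_same_deriv:
  assumes ok1: "qagen_ok P n ((I, p, J, q), lam)" and ok2: "qagen_ok P n ((I', p', J', q'), lam)"
    and K: "I' \<union> J' = I \<union> J" and e: "e \<in> I \<union> J"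
    and d: "mating_deriv e (I, p, J, q) = mating_deriv e (I', p', J', q')"
  shows "gen ((I, p, J, q), lam) - gen ((I', p', J', q'), lam) \<in> Rel"
proof -
  note g1 = qagen_okD[OF ok1] and g2 = qagen_okD[OF ok2]
  define N where "N = gen ((I \<union> J) - {e}, mating_deriv e (I, p, J, q), {e}, u e)"
  have "gen (I, p, J, q) - N \<in> Q_rel smul P subst rv (I \<union> J)"
    unfolding N_def by (rule Q_rel_deriv_unit[OF g1(8) e])
  moreover have "gen (I', p', J', q') - N \<in> Q_rel smul P subst rv (I \<union> J)"
    unfolding N_def d using Q_rel_deriv_unit[OF g2(8)] e K by simp
  ultimately have "gen (I, p, J, q) - gen (I', p', J', q') \<in> Q_rel smul P subst rv (I \<union> J)"
    using rspan_diff unfolding Q_rel_def by fastforce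
  then show ?thesis by (rule tag_Q_rel_gen[OF ok1])
qed

lemma tens_ren_left:
  assumes x: "pagen_ok P n (I, p, lam)" and y: "pagen_ok P n (J, q, mu)" and s: "inj_on s I"
    and lam': "lam' \<in> extensional (s ` I)" "\<And>i. i \<in> I \<Longrightarrow> lam' (s i) = lam i"
  shows "gen (tens (I, p, lam) (J, q, mu)) - gen (tens (s ` I, ren s I p, lam') (J, q, mu)) \<in> Rel"
  unfolding tens_simp
proof (rule Rel_relabel)
  note x' = pagen_okD[OF x] and y' = pagen_okD[OF y]
  have fin: "finite (s ` I)" using x' by simp
  define t where "t z = (if z \<in> I then s z else shift (s ` I) (z - Suc (Max I)))" for z
  have t_shift: "t (shift I j) = shift (s ` I) j" for j
    using shift_notin[OF x'(1)] by (simp add: t_def shift_def)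
  show "qagen_ok P n ((I, p, shift I ` J, ren (shift I) J q),
      restrict (\<lambda>z. if z \<in> I then lam z else mu (z - Suc (Max I))) (I \<union> shift I ` J))"
    using tens_ok[OF x y] by (simp add: tens_simp)
  have image_t: "t ` shift I ` J = shift (s ` I) ` J" "t ` I = s ` I"
    by (simp add: t_shift image_image) (auto simp: t_def)
  have "inj_on t I" using s by (simp add: t_def inj_on_def)
  moreover have "inj_on t (shift I ` J)"
    by (rule inj_onI) (clarsimp simp: t_shift, simp add: shift_def)
  moreover have "t ` I \<inter> t ` shift I ` J = {}" unfolding image_t using shift_disjoint[OF fin] .
  ultimately show "inj_on t (I \<union> shift I ` J)" by (auto simp: inj_on_Un)
  show "s ` I = t ` I" "shift (s ` I) ` J = t ` shift I ` J" by (simp_all add: image_t)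
  show "ren s I p = ren t I p" by (rule ren_cong) (use x' in \<open>auto simp: t_def\<close>)
  have "ren t (shift I ` J) (ren (shift I) J q) = ren (t \<circ> shift I) J q"
    using inj_shift \<open>inj_on t (shift I ` J)\<close> y'
      by (intro ren_comp[symmetric]) (auto intro: inj_on_subset)
  also have "\<dots> = ren (shift (s ` I)) J q" by (rule ren_cong) (use y' t_shift in auto)
  finally show "ren (shift (s ` I)) J q = ren t (shift I ` J) (ren (shift I) J q)" ..
  fix z assume "z \<in> I \<union> shift I ` J"
  then show "restrict (\<lambda>z. if z \<in> s ` I then lam' z else mu (z - Suc (Max (s ` I))))
      (s ` I \<union> shift (s ` I) ` J) (t z)
      = restrict (\<lambda>z. if z \<in> I then lam z else mu (z - Suc (Max I))) (I \<union> shift I ` J) z"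
  proof
    assume "z \<in> shift I ` J"
    then obtain j where "j \<in> J" "z = shift I j" by blast
    then show ?thesis using shift_notin[OF x'(1)] shift_notin[OF fin]
      by (auto simp: t_shift) (simp add: shift_def)
  qed (use lam' in \<open>simp add: t_def\<close>)
qed simp

lemma tens_eq_pair: "tens (I, p, lam) (J, q, mu)
    = ((I, p, shift I ` J, ren (shift I) J q), snd (tens (I, p, lam) (J, q, mu)))"
  by (simp add: tens_simp)

lemma tens_swapped_relabel:
  assumes x: "pagen_ok P n (I, p, lam)" and y: "pagen_ok P n (J, q, mu)"
  shows "gen ((shift I ` J, ren (shift I) J q, I, p), snd (tens (I, p, lam) (J, q, mu)))
       - gen (tens (J, q, mu) (I, p, lam)) \<in> Rel"
proof (subst (2) tens_eq_pair, rule Rel_relabel)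
  note x' = pagen_okD[OF x] and y' = pagen_okD[OF y]
  show "qagen_ok P n ((shift I ` J, ren (shift I) J q, I, p), snd (tens (I, p, lam) (J, q, mu)))"
    using tens_ok[OF x y] by (auto simp: tens_simp qagen_ok_def qgen_ok_def Un_commute)
  define t where "t z = (if z \<in> I then shift J z else z - Suc (Max I))" for z
  have t_shift: "t (shift I j) = j" for j
    using shift_notin[OF x'(1)] by (simp add: t_def shift_def)
  have image_t: "t ` shift I ` J = J" "t ` I = shift J ` I"
    by (simp add: t_shift image_image) (auto simp: t_def)
  have "inj_on t I" by (simp add: t_def inj_on_def shift_def)
  moreover have "inj_on t (shift I ` J)" by (rule inj_onI) (auto simp: t_shift)
  moreover have "t ` shift I ` J \<inter> t ` I = {}" unfolding image_t using shift_disjoint[OF y'(1)]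
    by blast
  ultimately show "inj_on t (shift I ` J \<union> I)" by (auto simp: inj_on_Un)
  show "J = t ` shift I ` J" "shift J ` I = t ` I" by (simp_all add: image_t)
  have "ren t (shift I ` J) (ren (shift I) J q) = ren (t \<circ> shift I) J q"
    using inj_shift \<open>inj_on t (shift I ` J)\<close> y'
      by (intro ren_comp[symmetric]) (auto intro: inj_on_subset)
  also have "\<dots> = q" by (rule ren_id_on) (use y' t_shift in auto)
  finally show "q = ren t (shift I ` J) (ren (shift I) J q)" ..
  show "ren (shift J) I p = ren t I p" by (rule ren_cong) (use x' in \<open>auto simp: t_def\<close>)
  show "snd (tens (J, q, mu) (I, p, lam)) \<in> extensional (J \<union> shift J ` I)" by (simp add: tens_simp)
  fix z assume "z \<in> shift I ` J \<union> I"
  then show "snd (tens (J, q, mu) (I, p, lam)) (t z) = snd (tens (I, p, lam) (J, q, mu)) z"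
    using x'(1) y'(1) by (auto simp: t_shift tens_labelling_left tens_labelling_right)
        (simp add: t_def tens_labelling_right)
qed

lemma tens_swap:
  assumes x: "pagen_ok P n (I, p, lam)" and y: "pagen_ok P n (J, q, mu)"
  shows "gen (tens (I, p, lam) (J, q, mu)) - gen (tens (J, q, mu) (I, p, lam)) \<in> Rel"
proof -
  have ok: "qagen_ok P n ((I, p, shift I ` J, ren (shift I) J q), snd
      (tens (I, p, lam) (J, q, mu)))"
    using tens_ok[OF x y] by (subst (asm) tens_eq_pair)
  have "gen (tens (I, p, lam) (J, q, mu))
      - gen ((shift I ` J, ren (shift I) J q, I, p), snd (tens (I, p, lam) (J, q, mu))) \<in> Rel"
    by (subst tens_eq_pair, rule tag_Q_rel_gen[OF ok])
      (use qagen_okD(8)[OF ok] in \<open>auto simp: Q_rel_def intro: rspan.base Q_rels_swapI\<close>)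
  from Rel_trans[OF this tens_swapped_relabel[OF x y]] show ?thesis .
qed

lemma Q_rel_sum_left:
  assumes a: "finite I" "finite J" "I \<inter> J = {}" "I \<union> J = K" "q \<in> P J"
    and S: "finite S" "\<And>g. g \<in> S \<Longrightarrow> f g \<in> P I"
  shows "(\<Sum>g\<in>S. vscale (c g) (gen (I, f g, J, q))) - gen (I, \<Sum>g\<in>S. smul (c g) (f g), J, q)
     \<in> Q_rel smul P subst rv K"
  using S
proof (induction S rule: finite_induct)
  case empty
  have "qgen_ok P K (I, 0, J, q)" using a P_zero by (auto simp: qgen_ok_def)
  then have "gen (I, 0 + 0, J, q) - gen (I, 0, J, q) - gen (I, 0, J, q) \<in> Q_rels smul P subst rv K"
    by (rule Q_rels_addI) (use P_zero a in auto)
  then show ?case unfolding Q_rel_def by (auto intro: rspan.base)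
next
  case (insert x F)
  define A where "A = smul (c x) (f x)"
  define B where "B = (\<Sum>g\<in>F. smul (c g) (f g))"
  have fx: "f x \<in> P I" using insert by auto
  have "A \<in> P I" unfolding A_def using P_scale a fx by auto
  then have okA: "qgen_ok P K (I, A, J, q)" and okx: "qgen_ok P K (I, f x, J, q)"
    using a fx by (auto simp: qgen_ok_def)
  have "B \<in> P I" unfolding B_def using insert.prems P_scale a(1) by (intro P_sum) auto
  then have add: "gen (I, A + B, J, q) - gen (I, A, J, q) - gen (I, B, J, q)
      \<in> rspan (Q_rels smul P subst rv K)"
    by (intro rspan.base Q_rels_addI[OF okA])
  have scale: "gen (I, A, J, q) - vscale (c x) (gen (I, f x, J, q))
      \<in> rspan (Q_rels smul P subst rv K)"
    unfolding A_def by (intro rspan.base Q_rels_scaleI[OF okx])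
  have IH: "(\<Sum>g\<in>F. vscale (c g) (gen (I, f g, J, q))) - gen (I, B, J, q)
      \<in> rspan (Q_rels smul P subst rv K)"
    using insert unfolding B_def Q_rel_def by auto
  have "((\<Sum>g\<in>F. vscale (c g) (gen (I, f g, J, q))) - gen (I, B, J, q))
      - (gen (I, A + B, J, q) - gen (I, A, J, q) - gen (I, B, J, q))
      - (gen (I, A, J, q) - vscale (c x) (gen (I, f x, J, q))) \<in> rspan (Q_rels smul P subst rv K)"
    using rspan_diff[OF rspan_diff[OF IH add] scale] .
  then show ?case
    using insert unfolding Q_rel_def by (simp add: A_def B_def algebra_simps)
qed

lemma tens_sum_left_zero:
  assumes y: "pagen_ok P n (J, q, mu)" and x: "finite I" "I \<noteq> {}" "lam \<in> I \<rightarrow>\<^sub>E Vbasis n"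
    and S: "finite S" "\<And>g. g \<in> S \<Longrightarrow> f g \<in> P I" and zero: "(\<Sum>g\<in>S. smul (c g) (f g)) = 0"
  shows "(\<Sum>g\<in>S. vscale (c g) (gen (tens (I, f g, lam) (J, q, mu)))) \<in> Rel"
proof -
  define nu where "nu = restrict (\<lambda>z. if z \<in> I then lam z else mu (z - Suc (Max I)))
      (I \<union> shift I ` J)"
  have "pagen_ok P n (I, 0, lam)" using x P_zero
    by (auto simp: pagen_ok_def Suc_le_eq card_gt_0_iff)
  then have ok: "qagen_ok P n ((I, 0, shift I ` J, ren (shift I) J q), nu)"
    using tens_ok[OF _ y] by (simp add: tens_simp nu_def)
  note ok' = qagen_okD[OF ok]
  have "tag nu ((\<Sum>g\<in>S. vscale (c g) (gen (I, f g, shift I ` J, ren (shift I) J q)))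
      - gen (I, \<Sum>g\<in>S. smul (c g) (f g), shift I ` J, ren (shift I) J q)) \<in> Rel"
    "tag nu ((\<Sum>g\<in>{}. vscale (c g) (gen (I, f g, shift I ` J, ren (shift I) J q)))
      - gen (I, \<Sum>g\<in>{}. smul (c g) (f g), shift I ` J, ren (shift I) J q)) \<in> Rel"
    using ok' S by (intro tag_Q_rel Q_rel_sum_left; simp)+
  then have
    "(\<Sum>g\<in>S. vscale (c g) (gen (tens (I, f g, lam) (J, q, mu))))
        - gen ((I, 0, shift I ` J, ren (shift I) J q), nu) \<in> Rel"
    "0 - gen ((I, 0, shift I ` J, ren (shift I) J q), nu) \<in> Rel"
    by (simp_all add: zero tag_def lext_sum lext_vscale lext_diff lext_uminus tens_simp nu_def)
  from Rel_diff[OF this] show ?thesis by simp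
qed

lemma br_gen_antisym:
  assumes G: "qagen_ok P n G" and H: "qagen_ok P n H"
  shows "br (gen G) (gen H) + br (gen H) (gen G) \<in> Rel"
proof -
  have "br (gen H) (gen G) = (\<Sum>a\<in>labels G. \<Sum>b\<in>labels H.
      vscale (sympl n (snd H b) (snd G a)) (gen (tens (deriv_at H b) (deriv_at G a))))"
    unfolding bracket_gen[OF H G] by (rule sum.swap)
  then have "br (gen G) (gen H) + br (gen H) (gen G) = (\<Sum>a\<in>labels G. \<Sum>b\<in>labels H.
      vscale (sympl n (snd G a) (snd H b))
        (gen (tens (deriv_at G a) (deriv_at H b)) - gen (tens (deriv_at H b) (deriv_at G a))))"
    unfolding bracket_gen[OF G H]
    by (simp add: sympl_antisym[of n "snd H _"] vscale_diff_right sum_subtractf[symmetric]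
          vscale_minus_left sum.distrib[symmetric] algebra_simps)
  also have "\<dots> \<in> Rel"
  proof (intro Rel_sum Rel_vscale)
    fix a b assume a: "a \<in> labels G" and b: "b \<in> labels H"
    show "gen (tens (deriv_at G a) (deriv_at H b)) - gen (tens (deriv_at H b) (deriv_at G a)) \<in> Rel"
      using tens_swap deriv_at_ok[OF G a] deriv_at_ok[OF H b] by (auto simp: deriv_at_def)
  qed
  finally show ?thesis .
qed

end

lemma keys_gen_diff: "Poly_Mapping.keys (gen a - gen b) \<subseteq> {a, b}"
  using keys_diff_subset[of "gen a" "gen b"] unfolding keys_gen by blast

lemma keys_gen_diff_vscale: "Poly_Mapping.keys (gen a - vscale c (gen b)) \<subseteq> {a, b}"
  using keys_diff_subset[of "gen a" "vscale c (gen b)"] keys_vscale_subset[of c "gen b"]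
    by (auto simp: keys_gen)

lemma keys_gen_diff_diff: "Poly_Mapping.keys (gen a - gen b - gen c) \<subseteq> {a, b, c}"
  using keys_diff_subset[of "gen a - gen b" "gen c"] keys_gen_diff[of a b] unfolding keys_gen
    by blast

context QA_setting
begin

lemma Q_rels_keys_ok:
  assumes r: "r \<in> Q_rels smul P subst rv K" and g: "g \<in> Poly_Mapping.keys r"
  shows "qgen_ok P K g"
  using r unfolding Q_rels_def
proof (elim UnE CollectE exE conjE)
  fix I p q J p' assume h: "r = gen (I, p + q, J, p') - gen (I, p, J, p') - gen (I, q, J, p')"
    "qgen_ok P K (I, p, J, p')" "q \<in> P I"
  have "g \<in> {(I, p + q, J, p'), (I, p, J, p'), (I, q, J, p')}" using g unfolding h(1)
    by (rule subsetD[OF keys_gen_diff_diff])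
  then show ?thesis using h P_add by (auto simp: qgen_ok_def)
next
  fix I p J p' c assume h: "r = gen (I, smul c p, J, p') - vscale c (gen (I, p, J, p'))"
    "qgen_ok P K (I, p, J, p')"
  have "g \<in> {(I, smul c p, J, p'), (I, p, J, p')}" using g unfolding h(1)
    by (rule subsetD[OF keys_gen_diff_vscale])
  then show ?thesis using h P_scale by (auto simp: qgen_ok_def)
next
  fix I p J p' q' assume h: "r = gen (I, p, J, p' + q') - gen (I, p, J, p') - gen (I, p, J, q')"
    "qgen_ok P K (I, p, J, p')" "q' \<in> P J"
  have "g \<in> {(I, p, J, p' + q'), (I, p, J, p'), (I, p, J, q')}" using g unfolding h(1)
    by (rule subsetD[OF keys_gen_diff_diff])
  then show ?thesis using h P_add by (auto simp: qgen_ok_def)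
next
  fix I p J p' c assume h: "r = gen (I, p, J, smul c p') - vscale c (gen (I, p, J, p'))"
    "qgen_ok P K (I, p, J, p')"
  have "g \<in> {(I, p, J, smul c p'), (I, p, J, p')}" using g unfolding h(1)
    by (rule subsetD[OF keys_gen_diff_vscale])
  then show ?thesis using h P_scale by (auto simp: qgen_ok_def)
next
  fix I p J p' assume h: "r = gen (I, p, J, p') - gen (J, p', I, p)" "qgen_ok P K (I, p, J, p')"
  have "g \<in> {(I, p, J, p'), (J, p', I, p)}" using g unfolding h(1)
    by (rule subsetD[OF keys_gen_diff])
  then show ?thesis using h by (auto simp: qgen_ok_def)
next
  fix I1 I2 I3 p1 p2 p3 y w
  assume h: "r = gen ((I2 - {y}) \<union> I3, subst I2 p2 y I3 p3, I1, p1)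
        - gen (I3, p3, (I2 - {y}) \<union> I1, subst ((I2 - {y}) \<union> {w}) (rv I2 y w p2) w I1 p1)"
    "finite I1" "finite I2" "finite I3" "I1 \<inter> I2 = {}" "I1 \<inter> I3 = {}" "I2 \<inter> I3 = {}"
    "y \<in> I2" "w \<notin> I1 \<union> I2 \<union> I3" "(I2 - {y}) \<union> I1 \<union> I3 = K"
    "p1 \<in> P I1" "p2 \<in> P I2" "p3 \<in> P I3"
  have "g \<in> {((I2 - {y}) \<union> I3, subst I2 p2 y I3 p3, I1, p1),
      (I3, p3, (I2 - {y}) \<union> I1, subst ((I2 - {y}) \<union> {w}) (rv I2 y w p2) w I1 p1)}"
    using g unfolding h(1) by (rule subsetD[OF keys_gen_diff])
  then show ?thesis
    using h graft_in[OF h(2-9) h(11-13)] rv_graft_in[OF h(2-9) h(11-13)] by (auto simp: qgen_ok_def)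
qed

lemma qagen_ok_of_qgen:
  "qgen_ok P K g \<Longrightarrow> 2 \<le> card K \<Longrightarrow> lam \<in> K \<rightarrow>\<^sub>E Vbasis n \<Longrightarrow> qagen_ok P n (g, lam)"
  by (cases g) (auto simp: qagen_ok_def qgen_ok_def)

lemma br_tag_gen:
  assumes K: "finite K" "2 \<le> card K" "lam \<in> K \<rightarrow>\<^sub>E Vbasis n"
    and keys: "\<And>g. g \<in> Poly_Mapping.keys r \<Longrightarrow> qgen_ok P K g" and H: "qagen_ok P n H"
  shows "br (tag lam r) (gen H) = (\<Sum>a\<in>K. \<Sum>b\<in>labels H. vscale (sympl n (lam a) (snd H b))
     (\<Sum>g\<in>Poly_Mapping.keys r. vscale (Poly_Mapping.lookup r g)
        (gen (tens (K - {a}, mating_deriv a g, restrict lam (K - {a})) (deriv_at H b)))))"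
    (is "_ = (\<Sum>a\<in>K. \<Sum>b\<in>labels H. vscale (?w a b) (\<Sum>g\<in>?S. vscale (?c g) (?X g a b)))")
proof -
  have "br (tag lam r) (gen H) = (\<Sum>g\<in>?S. vscale (?c g) (br (gen (g, lam)) (gen H)))"
    by (simp add: tag_def lext_def br_sum_left br_vscale_left)
  also have "\<dots> = (\<Sum>g\<in>?S. vscale (?c g) (\<Sum>a\<in>K. \<Sum>b\<in>labels H. vscale (?w a b) (?X g a b)))"
  proof (rule sum.cong[OF refl])
    fix g assume g: "g \<in> ?S"
    have "labels (g, lam) = K" using keys[OF g] by (cases g) (simp add: labels_def qgen_ok_def)
    then show "vscale (?c g) (br (gen (g, lam)) (gen H))
        = vscale (?c g) (\<Sum>a\<in>K. \<Sum>b\<in>labels H. vscale (?w a b) (?X g a b))"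
      using bracket_gen[OF qagen_ok_of_qgen[OF keys[OF g] K(2,3)] H] by (simp add: deriv_at_def)
  qed
  also have "\<dots> = (\<Sum>a\<in>K. \<Sum>g\<in>?S. \<Sum>b\<in>labels H. vscale (?w a b) (vscale (?c g) (?X g a b)))"
    by (subst sum.swap) (simp add: vscale_sum_right vscale_vscale mult.commute)
  also have "\<dots> = (\<Sum>a\<in>K. \<Sum>b\<in>labels H. vscale (?w a b) (\<Sum>g\<in>?S. vscale (?c g) (?X g a b)))"
    by (simp add: vscale_sum_right sum.swap[of _ ?S])
  finally show ?thesis .
qed

lemma br_tag_Q_rels:
  assumes K: "finite K" "2 \<le> card K" "lam \<in> K \<rightarrow>\<^sub>E Vbasis n"
    and r: "r \<in> Q_rels smul P subst rv K" and H: "qagen_ok P n H"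
  shows "br (tag lam r) (gen H) \<in> Rel"
proof -
  have "(\<Sum>a\<in>K. \<Sum>b\<in>labels H. vscale (sympl n (lam a) (snd H b))
     (\<Sum>g\<in>Poly_Mapping.keys r. vscale (Poly_Mapping.lookup r g)
        (gen (tens (K - {a}, mating_deriv a g, restrict lam (K - {a})) (deriv_at H b))))) \<in> Rel"
  proof (rule Rel_sum, rule Rel_sum, rule Rel_vscale)
    fix a b assume a: "a \<in> K" and b: "b \<in> labels H"
    obtain J q mu where y: "deriv_at H b = (J, q, mu)" by (cases "deriv_at H b") auto
    have "card (K - {a}) \<noteq> 0" using K a by (simp add: card_Diff_singleton)
    then have "K - {a} \<noteq> {}" by (metis card.empty)
    moreover have "(\<Sum>g\<in>Poly_Mapping.keys r. smul (Poly_Mapping.lookup r g) (mating_deriv a g)) = 0"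
      using mating_deriv_Q_rels[OF K(1) a r] by (simp add: lin_ext_def)
    ultimately show "(\<Sum>g\<in>Poly_Mapping.keys r. vscale (Poly_Mapping.lookup r g)
        (gen (tens (K - {a}, mating_deriv a g, restrict lam (K - {a})) (deriv_at H b)))) \<in> Rel"
      unfolding y using deriv_at_ok[OF H b] y K a mating_deriv_in Q_rels_keys_ok[OF r]
      by (intro tens_sum_left_zero) (auto simp: PiE_def Pi_def)
  qed
  then show ?thesis using br_tag_gen[OF K Q_rels_keys_ok[OF r] H] by simp
qed

lemma qagen_ok_relabel:
  assumes ok: "qagen_ok P n ((I, p, J, q), lam)" and s: "inj_on s (I \<union> J)"
  shows "qagen_ok P n ((s ` I, ren s I p, s ` J, ren s J q), restrict
      (lam \<circ> the_inv_into (I \<union> J) s) (s ` (I \<union> J)))"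
proof -
  note G = qagen_okD[OF ok]
  have "s ` I \<inter> s ` J = {}" using inj_on_image_Int[OF s, of I J] G by auto
  moreover have "card (s ` I \<union> s ` J) = card (I \<union> J)" using card_image[OF s] by (simp add: image_Un)
  moreover have "lam (the_inv_into (I \<union> J) s z) \<in> Vbasis n" if "z \<in> s ` (I \<union> J)" for z
    using that the_inv_into_f_f[OF s] G(7) by (auto simp: PiE_def Pi_def)
  moreover have "ren s I p \<in> P (s ` I)" "ren s J q \<in> P (s ` J)"
    using ren_closed G s by (auto intro: inj_on_subset)
  ultimately show ?thesis
    using G by (auto simp: qagen_ok_def qgen_ok_def PiE_def Pi_def image_Un)
qed

lemma deriv_at_relabel:
  assumes ok: "qgen_ok P (I \<union> J) (I, p, J, q)" and s: "inj_on s (I \<union> J)" and a: "a \<in> I \<union> J"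
  shows "deriv_at ((s ` I, ren s I p, s ` J, ren s J q), lam') (s a)
       = (s ` (I \<union> J - {a}), ren s (I \<union> J - {a}) (mating_deriv a (I, p, J, q)), restrict lam'
           (s ` (I \<union> J - {a})))"
proof -
  have "s ` I \<union> s ` J - {s a} = s ` (I \<union> J - {a})"
    using inj_on_image_set_diff[OF s, of "I \<union> J" "{a}"] a by (auto simp: image_Un)
  then show ?thesis using mating_deriv_ren[OF ok a s] by (simp add: deriv_at_simp)
qed

lemma br_relabel:
  assumes ok: "qagen_ok P n ((I, p, J, q), lam)" and s: "inj_on s (I \<union> J)" and H: "qagen_ok P n H"
  defines "lam' \<equiv> restrict (lam \<circ> the_inv_into (I \<union> J) s) (s ` (I \<union> J))"
  shows "br (gen ((I, p, J, q), lam)) (gen H)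
      - br (gen ((s ` I, ren s I p, s ` J, ren s J q), lam')) (gen H) \<in> Rel"
proof -
  define K where "K = I \<union> J"
  define G where "G = ((I, p, J, q), lam)"
  define G' where "G' = ((s ` I, ren s I p, s ` J, ren s J q), lam')"
  note G_ok = qagen_okD[OF ok]
  have ok': "qagen_ok P n G'" unfolding G'_def lam'_def by (rule qagen_ok_relabel[OF ok s])
  have lam'_s: "\<And>a. a \<in> K \<Longrightarrow> lam' (s a) = lam a"
    using the_inv_into_f_f[OF s] by (simp add: lam'_def K_def)
  let ?w = "\<lambda>a b. sympl n (lam a) (snd H b)"
  have "br (gen G) (gen H) - br (gen G') (gen H) = (\<Sum>a\<in>K. \<Sum>b\<in>labels H.
      vscale (?w a b) (gen (tens (deriv_at G a) (deriv_at H b))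
          - gen (tens (deriv_at G' (s a)) (deriv_at H b))))"
  proof -
    have "labels G' = s ` K" by (simp add: G'_def labels_def K_def image_Un)
    then have "br (gen G') (gen H) = (\<Sum>a'\<in>s ` K. \<Sum>b\<in>labels H.
        vscale (sympl n (lam' a') (snd H b)) (gen (tens (deriv_at G' a') (deriv_at H b))))"
      using bracket_gen[OF ok' H] by (simp add: G'_def)
    also have "\<dots> = (\<Sum>a\<in>K. \<Sum>b\<in>labels H. vscale (?w a b)
        (gen (tens (deriv_at G' (s a)) (deriv_at H b))))"
      using s by (subst sum.reindex) (auto simp: K_def lam'_s intro!: sum.cong)
    finally have "br (gen G') (gen H)
        = (\<Sum>a\<in>K. \<Sum>b\<in>labels H. vscale (?w a b) (gen (tens (deriv_at G' (s a)) (deriv_at H b))))" .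
    then show ?thesis
      using bracket_gen[OF ok[folded G_def] H]
      by (simp add: G_def labels_def K_def vscale_diff_right sum_subtractf)
  qed
  also have "\<dots> \<in> Rel"
  proof (intro Rel_sum Rel_vscale)
    fix a b assume a: "a \<in> K" and b: "b \<in> labels H"
    obtain J' q' mu where y: "deriv_at H b = (J', q', mu)" by (cases "deriv_at H b") auto
    have x: "deriv_at G a = (K - {a}, mating_deriv a (I, p, J, q), restrict lam (K - {a}))"
      by (simp add: G_def deriv_at_simp K_def)
    have "pagen_ok P n (K - {a}, mating_deriv a (I, p, J, q), restrict lam (K - {a}))"
      using deriv_at_ok[OF ok, of a] a x by (simp add: G_def labels_def K_def)
    moreover have "inj_on s (K - {a})" using s by (auto simp: K_def intro: inj_on_subset)
    ultimately show "gen (tens (deriv_at G a) (deriv_at H b))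
        - gen (tens (deriv_at G' (s a)) (deriv_at H b)) \<in> Rel"
      unfolding x G'_def deriv_at_relabel[OF G_ok(8) s a[unfolded K_def]] y K_def[symmetric]
      using deriv_at_ok[OF H b] y lam'_s by (intro tens_ren_left) auto
  qed
  finally show ?thesis by (simp add: G_def G'_def)
qed

lemma QA_gen: "qagen_ok P n g \<Longrightarrow> gen g \<in> QA"
  unfolding QA_space_def by (rule rspan.base) blast

lemma QA_sum: "(\<And>x. x \<in> S \<Longrightarrow> f x \<in> QA) \<Longrightarrow> sum f S \<in> QA"
  unfolding QA_space_def by (rule rspan_sum)

lemma QA_vscale: "a \<in> QA \<Longrightarrow> vscale c a \<in> QA"
  unfolding QA_space_def by (rule rspan.scale)

lemma QA_rels_in_QA:
  assumes "r \<in> QA_rels smul P ren subst rv n" shows "r \<in> QA"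
  using assms unfolding QA_rels_def
proof (elim UnE CollectE exE conjE)
  fix K lam rq assume h: "r = tag lam rq" "finite K" "2 \<le> card K" "lam \<in> K \<rightarrow>\<^sub>E Vbasis n"
    "rq \<in> Q_rels smul P subst rv K"
  show ?thesis unfolding h(1) tag_def lext_def
    by (intro QA_sum QA_vscale QA_gen qagen_ok_of_qgen[OF Q_rels_keys_ok[OF h(5)] h(3,4)])
next
  fix I p J p' lam s
  assume h: "r = gen ((I, p, J, p'), lam) - gen ((s ` I, ren s I p, s ` J, ren s J p'),
               restrict (lam \<circ> the_inv_into (I \<union> J) s) (s ` (I \<union> J)))"
    "qagen_ok P n ((I, p, J, p'), lam)" "inj_on s (I \<union> J)"
  show ?thesis unfolding h(1) QA_space_def
    using QA_gen[OF h(2)] QA_gen[OF qagen_ok_relabel[OF h(2,3)]] unfolding QA_space_def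
      by (rule rspan_diff)
qed

lemma Rel_in_QA: "r \<in> Rel \<Longrightarrow> r \<in> QA"
  unfolding QA_rel_def using QA_rels_in_QA rspan_mono unfolding QA_space_def by blast

lemma br_QA_rels_left:
  assumes r: "r \<in> QA_rels smul P ren subst rv n" and H: "qagen_ok P n H"
  shows "br r (gen H) \<in> Rel"
  using r unfolding QA_rels_def
proof (elim UnE CollectE exE conjE)
  fix K lam rq assume h: "r = tag lam rq" "finite K" "2 \<le> card K" "lam \<in> K \<rightarrow>\<^sub>E Vbasis n"
    "rq \<in> Q_rels smul P subst rv K"
  show ?thesis unfolding h(1) by (rule br_tag_Q_rels[OF h(2-5) H])
next
  fix I p J p' lam s
  assume h: "r = gen ((I, p, J, p'), lam) - gen ((s ` I, ren s I p, s ` J, ren s J p'),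
               restrict (lam \<circ> the_inv_into (I \<union> J) s) (s ` (I \<union> J)))"
    "qagen_ok P n ((I, p, J, p'), lam)" "inj_on s (I \<union> J)"
  show ?thesis unfolding h(1) br_diff_left by (rule br_relabel[OF h(2,3) H])
qed

lemma br_gen_in_QA:
  assumes G: "qagen_ok P n G" and H: "qagen_ok P n H"
  shows "br (gen G) (gen H) \<in> QA"
  unfolding bracket_gen[OF G H]
proof (intro QA_sum QA_vscale QA_gen)
  fix a b assume a: "a \<in> labels G" and b: "b \<in> labels H"
  show "qagen_ok P n (tens (deriv_at G a) (deriv_at H b))"
    using tens_ok deriv_at_ok[OF G a] deriv_at_ok[OF H b] by (auto simp: deriv_at_def)
qed

lemma br_bilinear_rspan:
  assumes "F \<in> rspan A" "H \<in> rspan B" "\<And>a b. a \<in> A \<Longrightarrow> b \<in> B \<Longrightarrow> br a b \<in> rspan C"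
  shows "br F H \<in> rspan C"
  using assms(1)
proof (rule rspan_linear[where L = "\<lambda>F. br F H"])
  fix a assume a: "a \<in> A"
  show "br a H \<in> rspan C"
    using assms(2) by (rule rspan_linear[where L = "br a"])
        (simp_all add: assms(3) a br_add_right br_vscale_right)
qed (simp_all add: br_add_left br_vscale_left)

lemma br_in_QA:
  assumes "F \<in> QA" "H \<in> QA" shows "br F H \<in> QA"
  using assms unfolding QA_space_def
proof (rule br_bilinear_rspan)
  fix a b assume "a \<in> {gen g |g. qagen_ok P n g}" "b \<in> {gen g |g. qagen_ok P n g}"
  then show "br a b \<in> rspan {gen g |g. qagen_ok P n g}" using br_gen_in_QA unfolding QA_space_def
    by blast
qed

lemma br_Rel_left:
  assumes "F \<in> Rel" "H \<in> QA" shows "br F H \<in> Rel"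
  using assms unfolding QA_space_def QA_rel_def
proof (rule br_bilinear_rspan)
  fix a b assume "a \<in> QA_rels smul P ren subst rv n" "b \<in> {gen g |g. qagen_ok P n g}"
  then show "br a b \<in> rspan (QA_rels smul P ren subst rv n)" using br_QA_rels_left
    unfolding QA_rel_def by blast
qed

lemma br_antisym:
  assumes "F \<in> QA" "H \<in> QA" shows "br F H + br H F \<in> Rel"
proof -
  have gen_case: "br G H + br H G \<in> Rel" if G: "G \<in> {gen g |g. qagen_ok P n g}" for G
    using assms(2) unfolding QA_space_def QA_rel_def
  proof (rule rspan_linear[where L = "\<lambda>H. br G H + br H G"])
    fix b assume "b \<in> {gen g |g. qagen_ok P n g}"
    then show "br G b + br b G \<in> rspan (QA_rels smul P ren subst rv n)"
      using G br_gen_antisym unfolding QA_rel_def by blast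
  qed (simp_all add: br_add_left br_add_right br_vscale_left br_vscale_right vscale_add_right)
  show ?thesis
    using assms(1) unfolding QA_space_def QA_rel_def
    by (rule rspan_linear[where L = "\<lambda>F. br F H + br H F"])
      (simp_all add: gen_case[unfolded QA_rel_def] br_add_left br_add_right br_vscale_left
          br_vscale_right
        vscale_add_right)
qed

lemma br_Rel_right:
  assumes "F \<in> Rel" "H \<in> QA" shows "br H F \<in> Rel"
  using Rel_diff[OF br_antisym[OF Rel_in_QA[OF assms(1)] assms(2)] br_Rel_left[OF assms]] by simp

end

section \<open>The Jacobi identity\<close>

context reversible_operad
begin

lemma rv_ren_root:
  assumes "finite I" "c \<in> I" "v \<notin> I" "w \<notin> I" "w \<noteq> v" "p \<in> P I"
  shows "rv ((I - {c}) \<union> {v}) v w (ren (id(c := v)) I p) = rv I c w p"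
proof -
  define s where "s = id(c := v)"
  have "ren s ((I - {c}) \<union> {w}) (rv I c w p) = rv (s ` I) (s c) (s w) (ren s I p)"
    by (rule rev_ren) (use assms in \<open>auto simp: s_def inj_on_def\<close>)
  moreover have "ren s ((I - {c}) \<union> {w}) (rv I c w p) = rv I c w p"
    by (rule ren_id_on) (use assms rev_closed in \<open>auto simp: s_def\<close>)
  moreover have "s ` I = (I - {c}) \<union> {v}" "s c = v" "s w = w" using assms by (auto simp: s_def)
  ultimately show ?thesis by (simp add: s_def)
qed

text \<open>The operadic identity behind the Jacobi identity: both sides are the derivative at an input
  \<open>e\<close> of \<open>f\<^sub>A\<close> of the composite obtained by grafting \<open>f\<^sub>A\<close> and \<open>f\<^sub>C\<close> into the two roots
  \<open>a\<close> and \<open>c\<close> of \<open>f\<^sub>B\<close>, computed in the two possible orders.\<close>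

lemma subst_rv_jacobi:
  assumes fin: "finite IA" "finite B0" "finite IC"
    and disj: "IA \<inter> B0 = {}" "IA \<inter> IC = {}" "B0 \<inter> IC = {}"
    and c: "c \<notin> IA \<union> B0 \<union> IC" and a: "a \<notin> B0" "a \<noteq> c" and e: "e \<in> IA"
    and w: "w \<notin> IA \<union> B0 \<union> IC \<union> {a, c}" and v: "v \<notin> IA \<union> B0 \<union> IC \<union> {a, c, w}"
    and v': "v' \<notin> IA \<union> B0 \<union> IC \<union> {c}"
    and fP: "fA \<in> P IA" "fB \<in> P (B0 \<union> {c})" "fC \<in> P IC"
  shows "subst ((IA - {e}) \<union> {w}) (rv IA e w fA) w (B0 \<union> IC)
           (subst (B0 \<union> {v'}) (rv (B0 \<union> {c}) c v' fB) v' IC fC)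
       = subst (((IA \<union> B0) - {e}) \<union> {w})
           (rv (IA \<union> B0) e w (subst (B0 \<union> {v}) (rv (B0 \<union> {a}) a v (rv (B0 \<union> {c}) c a fB)) v IA fA))
           w IC fC"
proof -
  define g where "g = ren (id(c := v)) (B0 \<union> {c}) fB"
  define hB where "hB = rv (B0 \<union> {c}) c w fB"
  define X where "X = subst (B0 \<union> {w}) hB w IC fC"
  have Bc: "(B0 \<union> {c}) - {c} = B0" using c by auto
  have "inj_on (id(c := v)) (B0 \<union> {c})" "id(c := v) ` (B0 \<union> {c}) = B0 \<union> {v}"
    using c v by (auto simp: inj_on_def)
  then have gP: "g \<in> P (B0 \<union> {v})"
    using ren_closed[of "B0 \<union> {c}" "id(c := v)" fB] fin fP by (simp add: g_def)
  have hBP: "hB \<in> P (B0 \<union> {w})"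
    using rev_closed[of "B0 \<union> {c}" c w fB] fin w fP unfolding hB_def Bc by simp
  have XP: "X \<in> P (B0 \<union> IC)"
    using subst_closed[of "B0 \<union> {w}" IC w hB fC] fin disj w hBP fP by (auto simp: X_def Un_Diff)
  have "subst (B0 \<union> {v'}) (rv (B0 \<union> {c}) c v' fB) v' IC fC = X"
    using subst_rv_root_indep[of "B0 \<union> {c}" IC c v' w fB fC] fin disj c v' w fP
      by (simp add: X_def hB_def Bc)
  then have "subst ((IA - {e}) \<union> {w}) (rv IA e w fA) w (B0 \<union> IC)
           (subst (B0 \<union> {v'}) (rv (B0 \<union> {c}) c v' fB) v' IC fC)
      = subst ((IA - {e}) \<union> {v}) (rv IA e v fA) v (B0 \<union> IC) X"
    using subst_rv_root_indep[of IA "B0 \<union> IC" e w v fA X] fin disj e w v fP XP by auto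
  also have "\<dots> = subst ((((IA - {e}) \<union> {v}) - {v}) \<union> (B0 \<union> {w}))
      (subst ((IA - {e}) \<union> {v}) (rv IA e v fA) v (B0 \<union> {w}) hB) w IC fC"
    using subst_assoc_seq[of "(IA - {e}) \<union> {v}" "B0 \<union> {w}" IC v w "rv IA e v fA" hB fC]
      fin disj e w v hBP fP rev_closed[of IA e v fA] by (auto simp: X_def Un_Diff)
  also have "subst ((IA - {e}) \<union> {v}) (rv IA e v fA) v (B0 \<union> {w}) hB
      = rv (IA \<union> B0) e w (subst (B0 \<union> {v}) g v IA fA)"
  proof -
    have "rv (((B0 \<union> {v}) - {v}) \<union> IA) e w (subst (B0 \<union> {v}) g v IA fA)
      = subst ((IA - {e}) \<union> {v}) (rv IA e v fA) v (((B0 \<union> {v}) - {v}) \<union> {w}) (rv (B0 \<union> {v}) v w g)"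
      by (rule rev_subst2) (use fin disj e w v gP fP in auto)
    moreover have "rv (B0 \<union> {v}) v w g = hB"
      using rv_ren_root[of "B0 \<union> {c}" c v w fB] fin c v w fP by (simp add: g_def hB_def Bc)
    moreover have "((B0 \<union> {v}) - {v}) \<union> IA = IA \<union> B0" "((B0 \<union> {v}) - {v}) \<union> {w} = B0 \<union> {w}"
      using v by auto
    ultimately show ?thesis by simp
  qed
  also have "rv (B0 \<union> {a}) a v (rv (B0 \<union> {c}) c a fB) = g"
    using rv_rv[of "B0 \<union> {c}" c a v fB] fin c a v fP by (simp add: g_def Bc)
  moreover have "(((IA - {e}) \<union> {v}) - {v}) \<union> (B0 \<union> {w}) = ((IA \<union> B0) - {e}) \<union> {w}"
    using v e disj w by auto
  ultimately show ?thesis by simp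
qed

end

text \<open>The two terms compared in the Jacobi identity: \<open>A \<otimes> \<partial>\<^sub>c(\<partial>\<^sub>aB \<otimes> C)\<close> and
  \<open>C \<otimes> \<partial>\<^sub>a(A \<otimes> \<partial>\<^sub>cB)\<close>, for two distinct labels \<open>a, c\<close> of \<open>B\<close>.\<close>

locale jacobi_terms = QA_setting +
  fixes IA fA lA IC fC lC B a c
  assumes A_ok: "pagen_ok P n (IA, fA, lA)" and C_ok: "pagen_ok P n (IC, fC, lC)"
    and B_ok: "qagen_ok P n B" and a_in: "a \<in> labels B" and c_in: "c \<in> labels B" and a_ne_c: "a \<noteq> c"
begin

abbreviation "sh1 \<equiv> shift (labels B - {a})"
abbreviation "sh2 \<equiv> shift IA"
abbreviation "sh3 \<equiv> shift IC"

definition "B0 = labels B - {a, c}"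
definition "phi1 = mating_deriv c (labels B - {a}, mating_deriv a (fst B), sh1 ` IC, ren sh1 IC fC)"
definition "phi2 = mating_deriv (sh2 a)
    (IA, fA, sh2 ` (labels B - {c}), ren sh2 (labels B - {c}) (mating_deriv c (fst B)))"
definition "M = IA \<union> sh2 ` B0"
definition "ICs = sh2 ` sh1 ` IC"
definition "fCs = ren (sh2 \<circ> sh1) IC fC"

definition "term1 = tens (IA, fA, lA) (deriv_at (tens (deriv_at B a) (IC, fC, lC)) c)"
definition "term2 = tens (IC, fC, lC) (deriv_at (tens (IA, fA, lA) (deriv_at B c)) (sh2 a))"

lemma finite_sets: "finite (labels B)" "finite IA" "finite IC" "finite B0"
  using qagen_ok_labels(1)[OF B_ok] pagen_okD[OF A_ok] pagen_okD[OF C_ok] by (auto simp: B0_def)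

lemma B_minus: "labels B - {a} = B0 \<union> {c}" "labels B - {c} = B0 \<union> {a}" "a \<notin> B0" "c \<notin> B0"
  using a_in c_in a_ne_c by (auto simp: B0_def)

lemma deriv_B_in: "mating_deriv a (fst B) \<in> P (B0 \<union> {c})" "mating_deriv c (fst B) \<in> P (B0 \<union> {a})"
  using mating_deriv_in[OF qagen_ok_labels(2)[OF B_ok] a_in]
      mating_deriv_in[OF qagen_ok_labels(2)[OF B_ok] c_in]
  unfolding B_minus(1,2) .

lemma deriv_B_rv: "mating_deriv c (fst B) = rv (B0 \<union> {c}) c a (mating_deriv a (fst B))"
  using mating_deriv_rv[OF qagen_ok_labels(2)[OF B_ok] a_in c_in a_ne_c] B_minus by simp

lemma sh1_notin: "c \<notin> sh1 ` IC" "B0 \<inter> sh1 ` IC = {}"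
proof -
  have "(labels B - {a}) \<inter> sh1 ` IC = {}" using finite_sets by (simp add: shift_disjoint)
  then show "c \<notin> sh1 ` IC" "B0 \<inter> sh1 ` IC = {}" using B_minus by blast+
qed

lemma labels_inner:
  "labels (tens (deriv_at B a) (IC, fC, lC)) - {c} = B0 \<union> sh1 ` IC"
  "labels (tens (IA, fA, lA) (deriv_at B c)) - {sh2 a} = M"
proof -
  show "labels (tens (deriv_at B a) (IC, fC, lC)) - {c} = B0 \<union> sh1 ` IC"
    using sh1_notin B_minus by (auto simp: deriv_at_def labels_tens)
  have "sh2 a \<notin> IA \<union> sh2 ` B0"
    using shift_notin[of IA a] finite_sets B_minus(3) by (simp add: inj_image_mem_iff[OF inj_shift])
  then show "labels (tens (IA, fA, lA) (deriv_at B c)) - {sh2 a} = M"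
    using B_minus by (auto simp: deriv_at_def labels_tens M_def)
qed

lemma fst_term1: "fst term1 = (IA, fA, sh2 ` (B0 \<union> sh1 ` IC), ren sh2 (B0 \<union> sh1 ` IC) phi1)"
  using labels_inner(1) by (simp add: term1_def deriv_at_def tens_simp phi1_def)

lemma fst_term2: "fst term2 = (IC, fC, sh3 ` M, ren sh3 M phi2)"
  using labels_inner(2) by (simp add: term2_def deriv_at_def tens_simp phi2_def)

lemma labels_terms: "labels term1 = IA \<union> sh2 ` B0 \<union> ICs" "labels term2 = IC \<union> sh3 ` M"
  using fst_term1 fst_term2 by (auto simp: labels_def ICs_def)

lemma term_ok: "qagen_ok P n term1" "qagen_ok P n term2"
proof -
  have Ba: "pagen_ok P n (labels B - {a}, mating_deriv a (fst B), restrict (snd B) (labels B - {a}))"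
    and Bc: "pagen_ok P n (labels B - {c}, mating_deriv c (fst B), restrict (snd B) (labels B - {c}))"
    using deriv_at_ok[OF B_ok a_in] deriv_at_ok[OF B_ok c_in] by (simp_all add: deriv_at_def)
  have "c \<in> labels (tens (deriv_at B a) (IC, fC, lC))"
    "sh2 a \<in> labels (tens (IA, fA, lA) (deriv_at B c))"
    using B_minus by (simp_all add: deriv_at_def labels_tens)
  then have "pagen_ok P n (deriv_at (tens (deriv_at B a) (IC, fC, lC)) c)"
    "pagen_ok P n (deriv_at (tens (IA, fA, lA) (deriv_at B c)) (sh2 a))"
    using deriv_at_ok tens_ok[OF Ba C_ok] tens_ok[OF A_ok Bc] by (simp_all add: deriv_at_def)
  then show "qagen_ok P n term1" "qagen_ok P n term2"
    unfolding term1_def term2_def deriv_at_def using tens_ok A_ok C_ok by auto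
qed

lemma labelling_term1:
  "z \<in> IA \<Longrightarrow> snd term1 z = lA z"
  "b \<in> B0 \<Longrightarrow> snd term1 (sh2 b) = snd B b"
  "i \<in> IC \<Longrightarrow> snd term1 (sh2 (sh1 i)) = lC i"
proof -
  have inner: "snd term1 (sh2 x) = snd (tens (deriv_at B a) (IC, fC, lC)) x"
    if "x \<in> B0 \<union> sh1 ` IC" for x
    using tens_labelling_right[of IA x] finite_sets that labels_inner(1)
      by (simp add: term1_def deriv_at_def)
  have fin: "finite (labels B - {a})" using finite_sets by simp
  show "z \<in> IA \<Longrightarrow> snd term1 z = lA z"
    using finite_sets by (simp add: term1_def deriv_at_def tens_labelling_left)
  show "b \<in> B0 \<Longrightarrow> snd term1 (sh2 b) = snd B b"
    using inner[of b] tens_labelling_left[of b "labels B - {a}"] by (simp add: deriv_at_def B0_def)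
  show "i \<in> IC \<Longrightarrow> snd term1 (sh2 (sh1 i)) = lC i"
    using inner[of "sh1 i"] tens_labelling_right[OF fin, of i] by (simp add: deriv_at_def)
qed

lemma labelling_term2:
  "i \<in> IC \<Longrightarrow> snd term2 i = lC i"
  "x \<in> IA \<Longrightarrow> snd term2 (sh3 x) = lA x"
  "b \<in> B0 \<Longrightarrow> snd term2 (sh3 (sh2 b)) = snd B b"
proof -
  have inner: "snd term2 (sh3 m) = snd (tens (IA, fA, lA) (deriv_at B c)) m" if "m \<in> M" for m
    using tens_labelling_right[of IC m] finite_sets that labels_inner(2)
      by (simp add: term2_def deriv_at_def)
  show "i \<in> IC \<Longrightarrow> snd term2 i = lC i"
    using finite_sets by (simp add: term2_def deriv_at_def tens_labelling_left)
  show "x \<in> IA \<Longrightarrow> snd term2 (sh3 x) = lA x"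
    using inner[of x] tens_labelling_left[of x IA] finite_sets by (simp add: M_def deriv_at_def)
  show "b \<in> B0 \<Longrightarrow> snd term2 (sh3 (sh2 b)) = snd B b"
    using inner[of "sh2 b"] tens_labelling_right[of IA b] finite_sets
      by (simp add: M_def deriv_at_def B0_def)
qed

definition "fBs = ren sh2 (B0 \<union> {c}) (mating_deriv a (fst B))"

lemma shifted_sets:
  "finite (sh2 ` B0)" "finite ICs" "IA \<inter> sh2 ` B0 = {}" "IA \<inter> ICs = {}" "sh2 ` B0 \<inter> ICs = {}"
  "sh2 c \<notin> IA \<union> sh2 ` B0 \<union> ICs" "sh2 a \<notin> sh2 ` B0" "sh2 a \<noteq> sh2 c"
proof -
  note inj = inj_shift[of IA]
  show "finite (sh2 ` B0)" "finite ICs" using finite_sets by (simp_all add: ICs_def)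
  show "IA \<inter> sh2 ` B0 = {}" "IA \<inter> ICs = {}"
    unfolding ICs_def using finite_sets by (simp_all add: shift_disjoint)
  show "sh2 ` B0 \<inter> ICs = {}"
    unfolding ICs_def image_Int[OF inj, symmetric] using sh1_notin by simp
  show "sh2 c \<notin> IA \<union> sh2 ` B0 \<union> ICs" "sh2 a \<notin> sh2 ` B0" "sh2 a \<noteq> sh2 c"
    using shift_notin[of IA c] finite_sets sh1_notin B_minus a_ne_c
    by (simp_all add: ICs_def inj_image_mem_iff[OF inj] inj_eq[OF inj])
qed

lemma shifted_in: "fBs \<in> P (sh2 ` B0 \<union> {sh2 c})" "fCs \<in> P ICs" "phi2 \<in> P M"
proof -
  have "inj_on sh2 (B0 \<union> {c})" by (rule inj_on_subset[OF inj_shift]) simp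
  then show "fBs \<in> P (sh2 ` B0 \<union> {sh2 c})"
    using ren_closed[of "B0 \<union> {c}" sh2] finite_sets deriv_B_in by (simp add: fBs_def)
  have "inj_on (sh2 \<circ> sh1) IC" using inj_compose[OF inj_shift inj_shift]
    by (rule inj_on_subset) simp
  then show "fCs \<in> P ICs"
    using ren_closed[of IC "sh2 \<circ> sh1" fC] finite_sets pagen_okD[OF C_ok]
      by (simp add: fCs_def ICs_def image_comp)
  have "qagen_ok P n (tens (IA, fA, lA) (deriv_at B c))"
    using tens_ok[OF A_ok] deriv_at_ok[OF B_ok c_in] by (simp add: deriv_at_def)
  then have "qgen_ok P (labels (tens (IA, fA, lA) (deriv_at B c)))
      (fst (tens (IA, fA, lA) (deriv_at B c)))"
    by (rule qagen_ok_labels(2))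
  moreover note labels_inner(2)
  moreover have "sh2 a \<in> labels (tens (IA, fA, lA) (deriv_at B c))"
    using B_minus by (simp add: deriv_at_def labels_tens)
  ultimately show "phi2 \<in> P M"
    using mating_deriv_in by (fastforce simp: phi2_def tens_simp deriv_at_def)
qed

lemma term2_relabel: "gen term2 - gen ((ICs, fCs, M, phi2), snd term1) \<in> Rel"
proof -
  define t where "t z = (if z \<in> IC then sh2 (sh1 z) else z - Suc (Max IC))" for z
  have t_sh3: "t (sh3 m) = m" for m
    using shift_notin[of IC] finite_sets by (simp add: t_def) (simp add: shift_def)
  have image_t: "t ` sh3 ` M = M" "t ` IC = ICs"
    by (simp add: t_sh3 image_image) (auto simp: t_def ICs_def)
  have "inj_on t IC" by (auto simp: t_def inj_on_def inj_eq[OF inj_shift])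
  moreover have "inj_on t (sh3 ` M)" by (rule inj_onI) (auto simp: t_sh3)
  moreover have "t ` IC \<inter> t ` sh3 ` M = {}"
    unfolding image_t using shifted_sets by (auto simp: M_def)
  ultimately have inj: "inj_on t (IC \<union> sh3 ` M)" by (auto simp: inj_on_Un)
  have ok: "qagen_ok P n ((IC, fC, sh3 ` M, ren sh3 M phi2), snd term2)"
    using term_ok(2) fst_term2 by (metis prod.collapse)
  have "gen ((IC, fC, sh3 ` M, ren sh3 M phi2), snd term2) - gen ((ICs, fCs, M, phi2), snd term1)
      \<in> Rel"
  proof (rule Rel_relabel[OF ok inj])
    show "ICs = t ` IC" "M = t ` sh3 ` M" using image_t by simp_all
    show "fCs = ren t IC fC" unfolding fCs_def
      by (rule ren_cong) (use finite_sets pagen_okD[OF C_ok] in \<open>auto simp: t_def\<close>)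
    have "ren t (sh3 ` M) (ren sh3 M phi2) = ren (t \<circ> sh3) M phi2"
      using inj inj_shift finite_sets shifted_in
        by (intro ren_comp[symmetric]) (auto simp: M_def intro: inj_on_subset)
    also have "\<dots> = phi2" by (rule ren_id_on)
        (use finite_sets shifted_in t_sh3 in \<open>auto simp: M_def\<close>)
    finally show "phi2 = ren t (sh3 ` M) (ren sh3 M phi2)" ..
    have "ICs \<union> M = labels term1" by (auto simp: labels_terms M_def)
    then show "snd term1 \<in> extensional (ICs \<union> M)"
      using qagen_ok_labels(3)[OF term_ok(1)] by (simp add: PiE_def)
    fix z assume "z \<in> IC \<union> sh3 ` M"
    then consider "z \<in> IC" | x where "x \<in> IA" "z = sh3 x" | b where "b \<in> B0" "z = sh3 (sh2 b)"
      by (auto simp: M_def)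
    then show "snd term1 (t z) = snd term2 z"
    proof cases
      case 1
      then show ?thesis by (simp add: t_def labelling_term1 labelling_term2)
    qed (simp_all add: t_sh3 labelling_term1 labelling_term2)
  qed
  then show ?thesis using fst_term2 by (metis prod.collapse)
qed

lemma ren_phi1_eq:
  assumes v: "v \<notin> sh2 ` B0 \<union> {sh2 c} \<union> ICs"
  shows "ren sh2 (B0 \<union> sh1 ` IC) phi1
      = subst (sh2 ` B0 \<union> {v}) (rv (sh2 ` B0 \<union> {sh2 c}) (sh2 c) v fBs) v ICs fCs"
proof -
  have fin: "finite (labels B - {a})" using finite_sets by simp
  have ok: "qgen_ok P ((labels B - {a}) \<union> sh1 ` IC)
      (labels B - {a}, mating_deriv a (fst B), sh1 ` IC, ren sh1 IC fC)"
    using fin finite_sets deriv_B_in shift_disjoint[OF fin] ren_closed[of IC sh1 fC] pagen_okD[OF C_ok]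
      inj_on_subset[OF inj_shift] B_minus
    by (auto simp: qgen_ok_def)
  have "ren sh2 (sh1 ` IC) (ren sh1 IC fC) = ren (sh2 \<circ> sh1) IC fC"
    using finite_sets pagen_okD[OF C_ok] inj_on_subset[OF inj_shift]
      by (intro ren_comp[symmetric]) auto
  then have eqs: "(labels B - {a}) \<union> sh1 ` IC - {c} = B0 \<union> sh1 ` IC" "sh2 ` (labels B - {a})
      = sh2 ` B0 \<union> {sh2 c}"
    "ren sh2 (labels B - {a}) (mating_deriv a (fst B)) = fBs" "sh2 ` sh1 ` IC = ICs"
    "ren sh2 (sh1 ` IC) (ren sh1 IC fC) = fCs"
    using B_minus sh1_notin by (auto simp: fBs_def ICs_def fCs_def)
  have "mating_deriv (sh2 c) (sh2 ` (labels B - {a}), ren sh2 (labels B - {a})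
      (mating_deriv a (fst B)),
      sh2 ` sh1 ` IC, ren sh2 (sh1 ` IC) (ren sh1 IC fC))
          = ren sh2 ((labels B - {a}) \<union> sh1 ` IC - {c}) phi1"
    unfolding phi1_def using c_in a_ne_c
      by (intro mating_deriv_ren[OF ok] inj_on_subset[OF inj_shift]) auto
  then have "ren sh2 (B0 \<union> sh1 ` IC) phi1
      = mating_deriv (sh2 c) (sh2 ` B0 \<union> {sh2 c}, fBs, ICs, fCs)"
    unfolding eqs by simp
  also have "\<dots> = subst ((sh2 ` B0 \<union> {sh2 c}) - {sh2 c} \<union> {v})
      (rv (sh2 ` B0 \<union> {sh2 c}) (sh2 c) v fBs) v ICs fCs"
    using shifted_sets shifted_in v by (intro mating_deriv_left) auto
  finally show ?thesis using shifted_sets by (simp add: insert_Diff_if)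
qed

lemma phi2_eq:
  assumes v: "v \<notin> IA \<union> sh2 ` B0 \<union> {sh2 a}"
  shows "phi2 = subst (sh2 ` B0 \<union> {v})
      (rv (sh2 ` B0 \<union> {sh2 a}) (sh2 a) v (rv (sh2 ` B0 \<union> {sh2 c}) (sh2 c) (sh2 a) fBs)) v IA fA"
proof -
  have "ren sh2 ((B0 \<union> {c}) - {c} \<union> {a}) (rv (B0 \<union> {c}) c a (mating_deriv a (fst B)))
      = rv (sh2 ` (B0 \<union> {c})) (sh2 c) (sh2 a) (ren sh2 (B0 \<union> {c}) (mating_deriv a (fst B)))"
    by (rule rev_ren[OF _ _ _ inj_on_subset[OF inj_shift]])
        (use finite_sets B_minus(3) a_ne_c deriv_B_in(1) in simp_all)
  then have "ren sh2 (B0 \<union> {a}) (mating_deriv c (fst B))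
      = rv (sh2 ` B0 \<union> {sh2 c}) (sh2 c) (sh2 a) fBs"
    using deriv_B_rv B_minus by (simp add: fBs_def insert_Diff_if)
  moreover have "ren sh2 (B0 \<union> {a}) (mating_deriv c (fst B)) \<in> P (sh2 ` (B0 \<union> {a}))"
    by (rule ren_closed[OF _ inj_on_subset[OF inj_shift subset_UNIV]])
        (use finite_sets deriv_B_in(2) in simp_all)
  ultimately show ?thesis
    using mating_deriv_right[of IA "sh2 ` B0 \<union> {sh2 a}" "sh2 a" v fA] shifted_sets finite_sets v
      pagen_okD[OF A_ok] shift_disjoint[of IA "B0 \<union> {a}"] B_minus
    by (simp add: phi2_def insert_Diff_if)
qed

lemma deriv_term1:
  assumes e: "e \<in> IA"
  shows "mating_deriv e (fst term1) = mating_deriv e (ICs, fCs, M, phi2)"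
proof -
  obtain w where w: "w \<notin> IA \<union> sh2 ` B0 \<union> ICs \<union> {sh2 a, sh2 c}"
    using fresh_exists shifted_sets finite_sets by (metis finite_Un finite.insertI finite.emptyI)
  obtain v1 where v1: "v1 \<notin> IA \<union> sh2 ` B0 \<union> ICs \<union> {sh2 c}"
    using fresh_exists shifted_sets finite_sets by (metis finite_Un finite.insertI finite.emptyI)
  obtain v2 where v2: "v2 \<notin> IA \<union> sh2 ` B0 \<union> ICs \<union> {sh2 a, sh2 c, w}"
    using fresh_exists shifted_sets finite_sets by (metis finite_Un finite.insertI finite.emptyI)
  have phi1: "ren sh2 (B0 \<union> sh1 ` IC) phi1
      = subst (sh2 ` B0 \<union> {v1}) (rv (sh2 ` B0 \<union> {sh2 c}) (sh2 c) v1 fBs) v1 ICs fCs"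
    by (rule ren_phi1_eq) (use v1 in auto)
  have phi2: "phi2 = subst (sh2 ` B0 \<union> {v2})
      (rv (sh2 ` B0 \<union> {sh2 a}) (sh2 a) v2 (rv (sh2 ` B0 \<union> {sh2 c}) (sh2 c) (sh2 a) fBs)) v2 IA fA"
    by (rule phi2_eq) (use v2 in auto)
  have image: "sh2 ` (B0 \<union> sh1 ` IC) = sh2 ` B0 \<union> ICs" by (auto simp: ICs_def)
  have "ren sh2 (B0 \<union> sh1 ` IC) phi1 \<in> P (sh2 ` (B0 \<union> sh1 ` IC))"
    using qagen_ok_labels(2)[OF term_ok(1)] fst_term1 by (simp add: qgen_ok_def)
  then have phi1_in: "subst (sh2 ` B0 \<union> {v1}) (rv (sh2 ` B0 \<union> {sh2 c}) (sh2 c) v1 fBs) v1 ICs fCs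
      \<in> P (sh2 ` B0 \<union> ICs)"
    by (simp only: phi1 image)
  have "mating_deriv e (fst term1) = mating_deriv e (IA, fA, sh2 ` B0 \<union> ICs,
      subst (sh2 ` B0 \<union> {v1}) (rv (sh2 ` B0 \<union> {sh2 c}) (sh2 c) v1 fBs) v1 ICs fCs)"
    by (simp only: fst_term1 phi1 image)
  also have "\<dots> = subst ((IA - {e}) \<union> {w}) (rv IA e w fA) w (sh2 ` B0 \<union> ICs)
      (subst (sh2 ` B0 \<union> {v1}) (rv (sh2 ` B0 \<union> {sh2 c}) (sh2 c) v1 fBs) v1 ICs fCs)"
    by (rule mating_deriv_left) (use e w finite_sets shifted_sets pagen_okD[OF A_ok] phi1_in in auto)
  also have "\<dots> = subst ((M - {e}) \<union> {w}) (rv M e w phi2) w ICs fCs"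
    unfolding phi2 M_def by (rule subst_rv_jacobi)
        (use e w v1 v2 finite_sets shifted_sets shifted_in pagen_okD[OF A_ok] in auto)
  also have "\<dots> = mating_deriv e (ICs, fCs, M, phi2)"
  proof (rule mating_deriv_right[symmetric])
    show "ICs \<inter> M = {}" using shifted_sets(4,5) unfolding M_def by blast
    show "finite M" "e \<in> M" "w \<notin> ICs \<union> M" using e w finite_sets by (auto simp: M_def)
  qed (use shifted_sets shifted_in in auto)
  finally show ?thesis .
qed

lemma mid_ok: "qagen_ok P n ((ICs, fCs, M, phi2), snd term1)"
proof -
  have L: "ICs \<union> M = labels term1" by (auto simp: labels_terms M_def)
  have "2 \<le> card (labels term1)"
    using term_ok(1) fst_term1 by (cases term1) (simp add: qagen_ok_def labels_def)
  moreover have "ICs \<inter> M = {}" using shifted_sets by (auto simp: M_def)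
  ultimately show ?thesis
    using L finite_sets shifted_sets shifted_in qagen_ok_labels(3)[OF term_ok(1)]
    by (simp add: qagen_ok_def qgen_ok_def M_def)
qed

lemma term1_Rel_term2: "gen term1 - gen term2 \<in> Rel"
proof -
  obtain e where e: "e \<in> IA" using pagen_okD(2)[OF A_ok] by auto
  have ok: "qagen_ok P n ((IA, fA, sh2 ` (B0 \<union> sh1 ` IC), ren sh2 (B0 \<union> sh1 ` IC) phi1), snd term1)"
    using term_ok(1) fst_term1 by (metis prod.collapse)
  have K: "ICs \<union> M = IA \<union> sh2 ` (B0 \<union> sh1 ` IC)" by (auto simp: ICs_def M_def)
  have d: "mating_deriv e (IA, fA, sh2 ` (B0 \<union> sh1 ` IC), ren sh2 (B0 \<union> sh1 ` IC) phi1)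
      = mating_deriv e (ICs, fCs, M, phi2)"
    using deriv_term1[OF e] fst_term1 by simp
  have "gen ((IA, fA, sh2 ` (B0 \<union> sh1 ` IC), ren sh2 (B0 \<union> sh1 ` IC) phi1), snd term1)
      - gen ((ICs, fCs, M, phi2), snd term1) \<in> Rel"
    by (rule Rel_same_deriv[OF ok mid_ok K _ d]) (use e in simp)
  then have "gen term1 - gen ((ICs, fCs, M, phi2), snd term1) \<in> Rel"
    using fst_term1 by (metis prod.collapse)
  from Rel_diff[OF this term2_relabel] show ?thesis by simp
qed

end

lemma (in QA_setting) tens_deriv_tens_swap:
  assumes x: "pagen_ok P n x" and z: "pagen_ok P n z"
    and B: "qagen_ok P n B" "a \<in> labels B" "c \<in> labels B" "a \<noteq> c"
  shows "gen (tens x (deriv_at (tens (deriv_at B a) z) c))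
       - gen (tens z (deriv_at (tens x (deriv_at B c)) (shift (fst x) a))) \<in> Rel"
proof -
  obtain IA fA lA IC fC lC where xz: "x = (IA, fA, lA)" "z = (IC, fC, lC)"
    by (cases x, cases z) auto
  interpret jacobi_terms smul P ren subst rv u n IA fA lA IC fC lC B a c
    using x z B xz by unfold_locales auto
  show ?thesis using term1_Rel_term2 by (simp add: xz term1_def term2_def)
qed

lemma sum_Diff_singleton_if:
  "finite S \<Longrightarrow> (\<Sum>x\<in>S - {y}. f x) = (\<Sum>x\<in>S. if x = y then 0 else f x)"
  by (subst sum.mono_neutral_right[of S "S - {y}"]) (auto intro: sum.cong)

lemma sum_swap_off_diagonal:
  assumes "finite A" "finite B" "finite C"
  shows "(\<Sum>d\<in>A. \<Sum>c\<in>B. \<Sum>b\<in>C. \<Sum>a\<in>B - {c}. h a b c d) = (\<Sum>a\<in>B. \<Sum>b\<in>C. \<Sum>d\<in>A. \<Sum>c\<in>B - {a}. h a b c d)"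
proof -
  let ?g = "\<lambda>a b c d. if a = c then 0 else h a b c d"
  have "(\<Sum>d\<in>A. \<Sum>c\<in>B. \<Sum>b\<in>C. \<Sum>a\<in>B. ?g a b c d) = (\<Sum>c\<in>B. \<Sum>d\<in>A. \<Sum>b\<in>C. \<Sum>a\<in>B. ?g a b c d)"
    by (rule sum.swap)
  also have "\<dots> = (\<Sum>c\<in>B. \<Sum>b\<in>C. \<Sum>d\<in>A. \<Sum>a\<in>B. ?g a b c d)"
    by (rule sum.cong[OF refl]) (rule sum.swap)
  also have "\<dots> = (\<Sum>c\<in>B. \<Sum>b\<in>C. \<Sum>a\<in>B. \<Sum>d\<in>A. ?g a b c d)"
    by (rule sum.cong[OF refl], rule sum.cong[OF refl]) (rule sum.swap)
  also have "\<dots> = (\<Sum>c\<in>B. \<Sum>a\<in>B. \<Sum>b\<in>C. \<Sum>d\<in>A. ?g a b c d)"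
    by (rule sum.cong[OF refl]) (rule sum.swap)
  also have "\<dots> = (\<Sum>a\<in>B. \<Sum>c\<in>B. \<Sum>b\<in>C. \<Sum>d\<in>A. ?g a b c d)"
    by (rule sum.swap)
  also have "\<dots> = (\<Sum>a\<in>B. \<Sum>b\<in>C. \<Sum>c\<in>B. \<Sum>d\<in>A. ?g a b c d)"
    by (rule sum.cong[OF refl]) (rule sum.swap)
  also have "\<dots> = (\<Sum>a\<in>B. \<Sum>b\<in>C. \<Sum>d\<in>A. \<Sum>c\<in>B. ?g a b c d)"
    by (rule sum.cong[OF refl], rule sum.cong[OF refl]) (rule sum.swap)
  finally show ?thesis
    using assms by (simp add: sum_Diff_singleton_if eq_commute)
qed

context QA_setting
begin

lemma br_gen_tens:
  assumes G: "qagen_ok P n G" and x: "pagen_ok P n (I, p, lam)" and y: "pagen_ok P n (J, q, mu)"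
  defines "T \<equiv> tens (I, p, lam) (J, q, mu)"
  shows "br (gen G) (gen T) = (\<Sum>d\<in>labels G.
      (\<Sum>c\<in>I. vscale (sympl n (snd G d) (lam c)) (gen (tens (deriv_at G d) (deriv_at T c))))
    + (\<Sum>c\<in>J. vscale (sympl n (snd G d) (mu c))
        (gen (tens (deriv_at G d) (deriv_at T (shift I c))))))"
  unfolding bracket_gen[OF G tens_ok[OF x y, folded T_def]]
proof (rule sum.cong[OF refl])
  note x' = pagen_okD[OF x] and y' = pagen_okD[OF y]
  fix d
  let ?f = "\<lambda>c. vscale (sympl n (snd G d) (snd T c)) (gen (tens (deriv_at G d) (deriv_at T c)))"
  have "(\<Sum>c\<in>labels T. ?f c) = (\<Sum>c\<in>I. ?f c) + (\<Sum>c\<in>shift I ` J. ?f c)"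
    unfolding T_def labels_tens by (rule sum.union_disjoint) (use x' y' shift_disjoint in auto)
  also have "(\<Sum>c\<in>shift I ` J. ?f c) = (\<Sum>c\<in>J. ?f (shift I c))"
    by (rule sum.reindex[OF inj_on_subset[OF inj_shift subset_UNIV], unfolded comp_def])
  finally show "(\<Sum>c\<in>labels T. ?f c)
      = (\<Sum>c\<in>I. vscale (sympl n (snd G d) (lam c)) (gen (tens (deriv_at G d) (deriv_at T c))))
      + (\<Sum>c\<in>J. vscale (sympl n (snd G d) (mu c))
          (gen (tens (deriv_at G d) (deriv_at T (shift I c)))))"
    using x' y' by (simp add: T_def tens_labelling_left tens_labelling_right)
qed

text \<open>The two halves of \<open>{G\<^sub>1, {G\<^sub>2, G\<^sub>3}}\<close>: the outer derivative hits the factor coming from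
  \<open>G\<^sub>2\<close>, resp. from \<open>G\<^sub>3\<close>.\<close>

definition nested_br_first :: "'v qagen \<Rightarrow> 'v qagen \<Rightarrow> 'v qagen \<Rightarrow> 'v qagen vec" where
  "nested_br_first G1 G2 G3 = (\<Sum>a\<in>labels G2. \<Sum>b\<in>labels G3. \<Sum>d\<in>labels G1. \<Sum>c\<in>labels G2 - {a}.
     vscale (sympl n (snd G2 a) (snd G3 b) * sympl n (snd G1 d) (snd G2 c))
       (gen (tens (deriv_at G1 d) (deriv_at (tens (deriv_at G2 a) (deriv_at G3 b)) c))))"

definition nested_br_second :: "'v qagen \<Rightarrow> 'v qagen \<Rightarrow> 'v qagen \<Rightarrow> 'v qagen vec" where
  "nested_br_second G1 G2 G3 = (\<Sum>a\<in>labels G2. \<Sum>b\<in>labels G3. \<Sum>d\<in>labels G1. \<Sum>c\<in>labels G3 - {b}.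
     vscale (sympl n (snd G2 a) (snd G3 b) * sympl n (snd G1 d) (snd G3 c))
       (gen (tens (deriv_at G1 d) (deriv_at (tens (deriv_at G2 a) (deriv_at G3 b))
           (shift (labels G2 - {a}) c)))))"

lemma br_br_gen:
  assumes G1: "qagen_ok P n G1" and G2: "qagen_ok P n G2" and G3: "qagen_ok P n G3"
  shows "br (gen G1) (br (gen G2) (gen G3)) = nested_br_first G1 G2 G3 + nested_br_second G1 G2 G3"
proof -
  have "br (gen G1) (br (gen G2) (gen G3)) = (\<Sum>a\<in>labels G2. \<Sum>b\<in>labels G3.
      vscale (sympl n (snd G2 a) (snd G3 b))
          (br (gen G1) (gen (tens (deriv_at G2 a) (deriv_at G3 b)))))"
    unfolding bracket_gen[OF G2 G3] by (simp add: br_sum_right br_vscale_right)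
  also have "\<dots> = (\<Sum>a\<in>labels G2. \<Sum>b\<in>labels G3.
      (\<Sum>d\<in>labels G1. \<Sum>c\<in>labels G2 - {a}.
          vscale (sympl n (snd G2 a) (snd G3 b) * sympl n (snd G1 d) (snd G2 c))
            (gen (tens (deriv_at G1 d) (deriv_at (tens (deriv_at G2 a) (deriv_at G3 b)) c))))
      + (\<Sum>d\<in>labels G1. \<Sum>c\<in>labels G3 - {b}.
          vscale (sympl n (snd G2 a) (snd G3 b) * sympl n (snd G1 d) (snd G3 c))
            (gen (tens (deriv_at G1 d) (deriv_at (tens (deriv_at G2 a) (deriv_at G3 b))
                (shift (labels G2 - {a}) c))))))"
  proof (rule sum.cong[OF refl], rule sum.cong[OF refl])
    fix a b assume a: "a \<in> labels G2" and b: "b \<in> labels G3"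
    have x: "pagen_ok P n (labels G2 - {a}, mating_deriv a (fst G2), restrict (snd G2) (labels G2 - {a}))"
      and y: "pagen_ok P n (labels G3 - {b}, mating_deriv b (fst G3), restrict (snd G3) (labels G3 - {b}))"
      using deriv_at_ok[OF G2 a] deriv_at_ok[OF G3 b] by (simp_all add: deriv_at_def)
    show "vscale (sympl n (snd G2 a) (snd G3 b))
        (br (gen G1) (gen (tens (deriv_at G2 a) (deriv_at G3 b))))
      = (\<Sum>d\<in>labels G1. \<Sum>c\<in>labels G2 - {a}.
          vscale (sympl n (snd G2 a) (snd G3 b) * sympl n (snd G1 d) (snd G2 c))
            (gen (tens (deriv_at G1 d) (deriv_at (tens (deriv_at G2 a) (deriv_at G3 b)) c))))
      + (\<Sum>d\<in>labels G1. \<Sum>c\<in>labels G3 - {b}.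
          vscale (sympl n (snd G2 a) (snd G3 b) * sympl n (snd G1 d) (snd G3 c))
            (gen (tens (deriv_at G1 d) (deriv_at (tens (deriv_at G2 a) (deriv_at G3 b))
                (shift (labels G2 - {a}) c)))))"
      using br_gen_tens[OF G1 x y] a b
      by (simp add: deriv_at_def[of G2 a] deriv_at_def[of G3 b] vscale_sum_right vscale_add_right
          vscale_vscale
          sum.distrib)
  qed
  also have "\<dots> = nested_br_first G1 G2 G3 + nested_br_second G1 G2 G3"
    by (simp add: nested_br_first_def nested_br_second_def sum.distrib)
  finally show ?thesis .
qed

lemma nested_br_cancel:
  assumes A: "qagen_ok P n A" and B: "qagen_ok P n B" and C: "qagen_ok P n C"
  shows "nested_br_first A B C + nested_br_second C A B \<in> Rel"
proof -
  let ?X1 = "\<lambda>a b c d. gen (tens (deriv_at A d) (deriv_at (tens (deriv_at B a) (deriv_at C b)) c))"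
  let ?X2 = "\<lambda>a b c d. gen (tens (deriv_at C b)
      (deriv_at (tens (deriv_at A d) (deriv_at B c)) (shift (labels A - {d}) a)))"
  let ?w = "\<lambda>a b c d. sympl n (snd B a) (snd C b) * sympl n (snd A d) (snd B c)"
  have fin: "finite (labels A)" "finite (labels B)" "finite (labels C)"
    using qagen_ok_labels(1) A B C by blast+
  have "nested_br_second C A B
      = (\<Sum>d\<in>labels A. \<Sum>c\<in>labels B. \<Sum>b\<in>labels C. \<Sum>a\<in>labels B - {c}.
          vscale (- ?w a b c d) (?X2 a b c d))"
    unfolding nested_br_second_def
      by (intro sum.cong refl) (simp add: sympl_antisym[of n "snd C _"] mult.commute)
  also have "\<dots> = (\<Sum>a\<in>labels B. \<Sum>b\<in>labels C. \<Sum>d\<in>labels A. \<Sum>c\<in>labels B - {a}.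
      vscale (- ?w a b c d) (?X2 a b c d))"
    by (rule sum_swap_off_diagonal[OF fin])
  finally have "nested_br_first A B C + nested_br_second C A B
      = (\<Sum>a\<in>labels B. \<Sum>b\<in>labels C. \<Sum>d\<in>labels A.
      \<Sum>c\<in>labels B - {a}. vscale (?w a b c d) (?X1 a b c d - ?X2 a b c d))"
    unfolding nested_br_first_def
    by (simp add: vscale_diff_right vscale_minus_left sum.distrib[symmetric] sum_subtractf)
  also have "\<dots> \<in> Rel"
  proof (rule Rel_sum, rule Rel_sum, rule Rel_sum, rule Rel_sum, rule Rel_vscale)
    fix a b d c assume abcd: "a \<in> labels B" "b \<in> labels C" "d \<in> labels A" "c \<in> labels B - {a}"
    have "gen (tens (deriv_at A d) (deriv_at (tens (deriv_at B a) (deriv_at C b)) c))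
      - gen (tens (deriv_at C b) (deriv_at (tens (deriv_at A d) (deriv_at B c))
          (shift (fst (deriv_at A d)) a))) \<in> Rel"
      by (rule tens_deriv_tens_swap) (use abcd deriv_at_ok A B C in auto)
    then show "?X1 a b c d - ?X2 a b c d \<in> Rel" by (simp add: fst_deriv_at)
  qed
  finally show ?thesis .
qed

lemma jacobi_gen:
  assumes A: "qagen_ok P n A" and B: "qagen_ok P n B" and C: "qagen_ok P n C"
  shows "br (gen A) (br (gen B) (gen C)) + br (gen B) (br (gen C) (gen A))
      + br (gen C) (br (gen A) (gen B)) \<in> Rel"
proof -
  have "br (gen A) (br (gen B) (gen C)) + br (gen B) (br (gen C) (gen A))
      + br (gen C) (br (gen A) (gen B))
     = (nested_br_first A B C + nested_br_second C A B)
         + (nested_br_first B C A + nested_br_second A B C)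
       + (nested_br_first C A B + nested_br_second B C A)"
    unfolding br_br_gen[OF A B C] br_br_gen[OF B C A] br_br_gen[OF C A B]
      by (simp add: algebra_simps)
  also have "\<dots> \<in> Rel"
    by (intro Rel_add nested_br_cancel A B C)
  finally show ?thesis .
qed

lemma jacobi:
  assumes "F \<in> QA" "G \<in> QA" "H \<in> QA"
  shows "br F (br G H) + br G (br H F) + br H (br F G) \<in> Rel"
proof -
  let ?J = "\<lambda>F G H. br F (br G H) + br G (br H F) + br H (br F G)"
  let ?gens = "{gen g |g. qagen_ok P n g}"
  have lin: "?J (x + y) G H = ?J x G H + ?J y G H" "?J G (x + y) H = ?J G x H + ?J G y H"
    "?J G H (x + y) = ?J G H x + ?J G H y" "?J (vscale c x) G H = vscale c (?J x G H)"
    "?J G (vscale c x) H = vscale c (?J G x H)" "?J G H (vscale c x)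
        = vscale c (?J G H x)" for x y c G H
    by (simp_all add: br_add_left br_add_right br_vscale_left br_vscale_right vscale_add_right
        algebra_simps)
  have gens: "?J f g H \<in> Rel" if f: "f \<in> ?gens" and g: "g \<in> ?gens" for f g
    using assms(3) unfolding QA_space_def QA_rel_def
  proof (rule rspan_linear[where L = "?J f g"])
    fix h assume "h \<in> ?gens"
    then show "?J f g h \<in> rspan (QA_rels smul P ren subst rv n)"
      using f g jacobi_gen unfolding QA_rel_def by blast
  qed (simp_all add: lin)
  have gen_left: "?J f G H \<in> Rel" if f: "f \<in> ?gens" for f
    using assms(2) unfolding QA_space_def QA_rel_def
  proof (rule rspan_linear[where L = "\<lambda>G. ?J f G H"])
    fix g assume "g \<in> ?gens"
    then show "?J f g H \<in> rspan (QA_rels smul P ren subst rv n)" using gens f unfolding QA_rel_def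
      by blast
  qed (simp_all add: lin)
  show ?thesis
    using assms(1) unfolding QA_space_def QA_rel_def
  proof (rule rspan_linear[where L = "\<lambda>F. ?J F G H"])
    fix f assume "f \<in> ?gens"
    then show "?J f G H \<in> rspan (QA_rels smul P ren subst rv n)" using gen_left
      unfolding QA_rel_def by blast
  qed (simp_all add: lin)
qed

lemma lie_algebra: "lie_algebra_quot QA Rel br"
  unfolding lie_algebra_quot_def
proof (intro conjI ballI allI impI)
  fix F H assume "F \<in> QA" "H \<in> QA" then show "br F H \<in> QA" by (rule br_in_QA)
next
  fix F F' H assume F: "F \<in> QA" "F' \<in> QA" "H \<in> QA" "F - F' \<in> Rel"
  show "br F H - br F' H \<in> Rel" using br_Rel_left[OF F(4) F(3)] by (simp add: br_diff_left)
  show "br H F - br H F' \<in> Rel" using br_Rel_right[OF F(4) F(3)] by (simp add: br_diff_right)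
next
  fix F F' H c
  show "br (F + F') H - (br F H + br F' H) \<in> Rel" "br H (F + F') - (br H F + br H F') \<in> Rel"
    "br (vscale c F) H - vscale c (br F H) \<in> Rel" "br H (vscale c F) - vscale c (br H F) \<in> Rel"
    by (simp_all add: br_add_left br_add_right br_vscale_left br_vscale_right Rel_zero)
next
  fix F assume "F \<in> QA"
  then have "vscale (1/2) (br F F + br F F) \<in> Rel" by (intro Rel_vscale br_antisym)
  moreover have "vscale (1/2) (br F F + br F F) = br F F"
    by (rule vec_eqI) (simp add: lookup_add)
  ultimately show "br F F \<in> Rel" by simp
next
  fix F G H assume "F \<in> QA" "G \<in> QA" "H \<in> QA"
  then show "br F (br G H) + br G (br H F) + br H (br F G) \<in> Rel" by (rule jacobi)
qed

end

theorem proposition5p1: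
  fixes smul :: "rat \<Rightarrow> 'v::ab_group_add \<Rightarrow> 'v"
    and P :: "nat set \<Rightarrow> 'v set"
    and ren :: "(nat \<Rightarrow> nat) \<Rightarrow> nat set \<Rightarrow> 'v \<Rightarrow> 'v"
    and subst :: "nat set \<Rightarrow> 'v \<Rightarrow> nat \<Rightarrow> nat set \<Rightarrow> 'v \<Rightarrow> 'v"
    and rv :: "nat set \<Rightarrow> nat \<Rightarrow> nat \<Rightarrow> 'v \<Rightarrow> 'v"
    and u :: "nat \<Rightarrow> 'v"
    and n :: nat
  assumes "reversible_operad smul P ren subst rv u"
    and "1 \<le> n"
  shows "lie_algebra_quot (QA_space P n) (QA_rel smul P ren subst rv n)
           (bracket smul P ren subst rv u n)"
proof -
  interpret QA_setting smul P ren subst rv u n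
    using assms(1) by (simp add: QA_setting_def)
  show ?thesis by (rule lie_algebra)
qed

end
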